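(* Let $0<q<1/2$, $p=1-q$, $\lambda=q/p$, and let $z\geq 1$ and $A\geq z$ be integers. In the $A$-Nakamoto double spend strategy (described in the context), let $\mathbf{T}'$ be the time elapsed from the moment the attacker has pre-mined his block (start of the second phase) until the end of the attack cycle. Then $$\frac{\mathbb{E}[\mathbf{T}']}{\tau_0} = \frac{A+1}{p-q}\cdot\frac{1}{1-\lambda^{A+1}} - \frac{p^{z-1}q^z}{(p-q)B(z,z)} + \left(\frac{z}{p} - \frac{2(A+1)}{(p-q)(1-\lambda^{A+1})}\right) I_q(z,z),$$ where $B(a,b)=\int_0^1 t^{a-1}(1-t)^{b-1}\,dt$ and $I_x(a,b)=\frac{1}{B(a,b)}\int_0^x t^{a-1}(1-t)^{b-1}\,dt$.
   Context: Mining model: the attacker has relative hashrate $q$ and the honest miners relative hashrate $p=1-q$; blocks found by the honest miners and by the attacker form independent Poisson processes with rates $p/\tau_0$ and $q/\tau_0$ respectively ($\tau_0>0$); block propagation is instantaneous and difficulty is constant. The recipient requires $z$ confirmations. The $A$-Nakamoto double spend strategy (with one pre-mined block) is: (1) the attacker mines on top of the official chain a block containing a transaction returning the payment funds to himself, restarting on the new tip whenever the honest miners find a block first; (2) once this block is mined (kept secret), he sends the paying transaction to the vendor and keeps mining on his secret fork while honest miners extend the official chain (second phase); (3) the lag is (number of official blocks after the fork point) minus (number of blocks of the secret fork, including the pre-mined one); if the lag reaches $A$ the attacker gives up and the attack fails; (4) if, at a moment when the official chain has added at least $z$ blocks after the vendor transaction was sent, the secret fork is strictly longer than the official chain, the attacker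 publishes it and the attack succeeds; the cycle ends at success or failure. *)

theory Defs
  imports "HOL-Probability.Probability"
begin

definition exp_dist :: "real \<Rightarrow> real measure" where
  "exp_dist l = density lborel (\<lambda>x. ennreal (exponential_density l x))"

text \<open>Poisson process given by its stream of i.i.d. interarrival times:
  number of events in the time interval [0, t].\<close>
definition counting :: "real stream \<Rightarrow> real \<Rightarrow> nat" where
  "counting s t = card {k. (\<Sum>i\<le>k. s !! i) \<le> t}"

text \<open>Time 0 is the moment the attacker
  has pre-mined his block.  h = interarrival times of honest blocks, a = of attacker blocks.
  n = official blocks after the fork point, m = secret fork blocks (including pre-mined one).\<close>
definition attack_over :: "nat \<Rightarrow> nat \<Rightarrow> real stream \<Rightarrow> real stream \<Rightarrow> real \<Rightarrow> bool" where
  "attack_over A z h a t \<longleftrightarrow>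
     (let n = counting h t; m = 1 + counting a t in
        int n - int m \<ge> int A \<or> (n \<ge> z \<and> m > n))"

definition T' :: "nat \<Rightarrow> nat \<Rightarrow> real stream \<times> real stream \<Rightarrow> real" where
  "T' A z \<omega> = Inf {t. 0 \<le> t \<and> attack_over A z (fst \<omega>) (snd \<omega>) t}"

definition mining_space :: "real \<Rightarrow> real \<Rightarrow> (real stream \<times> real stream) measure" where
  "mining_space q tau0 =
     stream_space (exp_dist ((1 - q) / tau0)) \<Otimes>\<^sub>M stream_space (exp_dist (q / tau0))"

definition beta_fn :: "nat \<Rightarrow> nat \<Rightarrow> real" where
  "beta_fn a b = integral {0..1} (\<lambda>t::real. t ^ (a - 1) * (1 - t) ^ (b - 1))"

definition inc_beta :: "real \<Rightarrow> nat \<Rightarrow> nat \<Rightarrow> real" where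
  "inc_beta x a b = integral {0..x} (\<lambda>t::real. t ^ (a - 1) * (1 - t) ^ (b - 1)) / beta_fn a b"

end

(*
  Merging the two Poisson processes, each block is found after an independent Exp(1/tau0)
  waiting time and is honest with probability p, independently of that time and of the
  past: this is the exponential race together with memorylessness.  The numbers of
  official and secret blocks therefore perform a random walk, T' is the sum of the waiting
  times up to the step N at which the walk stops, and E[T'] = tau0 E[N]; truncating T' at
  the k-th block time and letting k go to infinity makes this rigorous.

  E[N] is the bounded solution of the one-step recurrence of the walk.  Once the official
  chain has z blocks, the lag performs a gambler's ruin between -1 and A, whose expected
  duration is explicit; before that the cycle cannot end, and the number of secret blocks
  found meanwhile is negative binomial.  At the start state (0, 1) the negative binomial
  distribution function appearing is 1 - I_q(z, z), which yields the formula.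
*)
theory Submission
  imports Defs
begin

section \<open>The incomplete beta function at equal integer parameters\<close>

text \<open>The probability that at most \<open>w\<close> failures, each of probability \<open>x\<close>, precede the
  \<open>(w + 1)\<close>-st success.\<close>
definition negbin_cdf :: "nat \<Rightarrow> real \<Rightarrow> real" where
  "negbin_cdf w x = (\<Sum>k<Suc w. real ((w + k) choose k) * (1 - x) ^ Suc w * x ^ k)"

definition negbin_partial_mean :: "nat \<Rightarrow> real \<Rightarrow> real" where
  "negbin_partial_mean w x = (\<Sum>k<Suc w. real ((w + k) choose k) * (1 - x) ^ Suc w * x ^ k * real k)"

definition beta_norm :: "nat \<Rightarrow> real" where
  "beta_norm w = real (Suc w) * real ((w + Suc w) choose w)"

lemma beta_norm_pos: "0 < beta_norm w"
  unfolding beta_norm_def by simp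

lemma negbin_cdf_0: "negbin_cdf w 0 = 1"
  unfolding negbin_cdf_def by (simp add: zero_power lessThan_Suc_eq_insert_0 sum.reindex)

lemma negbin_cdf_1: "negbin_cdf w 1 = 0"
  unfolding negbin_cdf_def by simp

lemma negbin_telescope:
  "(\<Sum>k<Suc K. real ((w + k) choose k) * (real k * (1 - x) * x ^ (k - 1) - real (Suc w) * x ^ k))
    = - real (Suc w) * real ((w + Suc K) choose K) * x ^ K"
proof (induction K)
  case 0
  then show ?case by simp
next
  case (Suc K)
  have "Suc K * ((w + Suc K) choose Suc K) = Suc w * ((w + Suc K) choose K)"
    using Suc_times_binomial_add[of K w] by (metis add.commute add_Suc_right)
  then have absorb: "real (Suc K) * real ((w + Suc K) choose Suc K) = real (Suc w) * real ((w + Suc K) choose K)"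
    by (metis of_nat_mult)
  have "(\<Sum>k<Suc (Suc K). real ((w + k) choose k) * (real k * (1 - x) * x ^ (k - 1) - real (Suc w) * x ^ k))
     = - real (Suc w) * real ((w + Suc K) choose K) * x ^ K
       + (real (Suc K) * real ((w + Suc K) choose Suc K)) * (1 - x) * x ^ K
       - real (Suc w) * real ((w + Suc K) choose Suc K) * x ^ Suc K"
    using Suc by (simp add: algebra_simps)
  also have "\<dots> = - real (Suc w) * real ((w + Suc (Suc K)) choose Suc K) * x ^ Suc K"
    unfolding absorb by (simp add: algebra_simps)
  finally show ?case .
qed

lemma negbin_cdf_deriv_eq:
  "(\<Sum>k<Suc w. real ((w + k) choose k) * ((1 - x) ^ Suc w * (real k * x ^ (k - 1))
      - real (Suc w) * (1 - x) ^ w * x ^ k)) = - beta_norm w * x ^ w * (1 - x) ^ w"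
proof -
  have "(\<Sum>k<Suc w. real ((w + k) choose k) * ((1 - x) ^ Suc w * (real k * x ^ (k - 1))
        - real (Suc w) * (1 - x) ^ w * x ^ k))
      = (1 - x) ^ w * (\<Sum>k<Suc w. real ((w + k) choose k) * (real k * (1 - x) * x ^ (k - 1) - real (Suc w) * x ^ k))"
    by (simp add: sum_distrib_left algebra_simps)
  then show ?thesis
    unfolding negbin_telescope beta_norm_def by (simp add: algebra_simps)
qed

lemma has_real_derivative_negbin_cdf:
  "(negbin_cdf w has_real_derivative (- beta_norm w * x ^ w * (1 - x) ^ w)) (at x)"
proof -
  have "((\<lambda>x. real ((w + k) choose k) * (1 - x) ^ Suc w * x ^ k) has_real_derivative
      real ((w + k) choose k) * ((1 - x) ^ Suc w * (real k * x ^ (k - 1)) - real (Suc w) * (1 - x) ^ w * x ^ k)) (at x)"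
    for k
    by (rule derivative_eq_intros refl | simp add: algebra_simps)+
  then have "(negbin_cdf w has_real_derivative (\<Sum>k<Suc w. real ((w + k) choose k)
      * ((1 - x) ^ Suc w * (real k * x ^ (k - 1)) - real (Suc w) * (1 - x) ^ w * x ^ k))) (at x)"
    unfolding negbin_cdf_def by (intro DERIV_sum)
  then show ?thesis
    unfolding negbin_cdf_deriv_eq .
qed

lemma has_integral_beta_kernel:
  assumes "0 \<le> x"
  shows "((\<lambda>t. t ^ w * (1 - t) ^ w) has_integral ((1 - negbin_cdf w x) / beta_norm w)) {0..x}"
proof -
  have "((\<lambda>t. - negbin_cdf w t / beta_norm w) has_real_derivative
      - (- beta_norm w * t ^ w * (1 - t) ^ w) / beta_norm w) (at t)" for t
    by (intro DERIV_cdivide DERIV_minus has_real_derivative_negbin_cdf)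
  then have "((\<lambda>t. - negbin_cdf w t / beta_norm w) has_real_derivative t ^ w * (1 - t) ^ w) (at t)" for t
    using beta_norm_pos[of w] by simp
  then have "((\<lambda>t. t ^ w * (1 - t) ^ w) has_integral
      (- negbin_cdf w x / beta_norm w - - negbin_cdf w 0 / beta_norm w)) {0..x}"
    by (intro fundamental_theorem_of_calculus[OF assms])
      (simp add: has_real_derivative_iff_has_vector_derivative[symmetric] has_field_derivative_at_within)
  then show ?thesis
    by (simp add: negbin_cdf_0 diff_divide_distrib)
qed

lemma beta_fn_Suc_Suc: "beta_fn (Suc w) (Suc w) = 1 / beta_norm w"
  unfolding beta_fn_def using has_integral_beta_kernel[of 1 w] by (simp add: negbin_cdf_1 integral_unique)

lemma inc_beta_Suc_Suc: "0 \<le> x \<Longrightarrow> inc_beta x (Suc w) (Suc w) = 1 - negbin_cdf w x"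
  unfolding inc_beta_def beta_fn_Suc_Suc using has_integral_beta_kernel[of x w] beta_norm_pos[of w]
  by (simp add: integral_unique)

lemma negbin_cdf_reflect: "negbin_cdf w x + negbin_cdf w (1 - x) = 1"
proof -
  have "((\<lambda>y. negbin_cdf w y + negbin_cdf w (1 - y)) has_real_derivative 0) (at y)" for y
  proof -
    have "((\<lambda>y. negbin_cdf w (1 - y)) has_real_derivative
        (- beta_norm w * (1 - y) ^ w * (1 - (1 - y)) ^ w) * (0 - 1)) (at y)"
      by (rule DERIV_chain2[OF has_real_derivative_negbin_cdf]) (rule derivative_eq_intros refl)+
    from DERIV_add[OF has_real_derivative_negbin_cdf[of w y] this] show ?thesis
      by (simp add: algebra_simps)
  qed
  then have "\<forall>y. ((\<lambda>y. negbin_cdf w y + negbin_cdf w (1 - y)) has_real_derivative 0) (at y)" ..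
  from DERIV_isconst_all[OF this, of x 0] show ?thesis
    by (simp add: negbin_cdf_0 negbin_cdf_1)
qed

lemma negbin_partial_mean_eq:
  "(1 - x) * negbin_partial_mean w x
     = real (Suc w) * x * negbin_cdf w x - beta_norm w * x ^ Suc w * (1 - x) ^ Suc w"
proof -
  have summand: "x * (1 - x) * ((1 - x) ^ Suc w * (real k * x ^ (k - 1)) - real (Suc w) * (1 - x) ^ w * x ^ k)
     = (1 - x) * ((1 - x) ^ Suc w * x ^ k * real k) - real (Suc w) * x * ((1 - x) ^ Suc w * x ^ k)" for k
    by (cases k) (simp_all add: algebra_simps)
  have "x * (1 - x) * (- beta_norm w * x ^ w * (1 - x) ^ w)
     = (\<Sum>k<Suc w. real ((w + k) choose k) * (x * (1 - x) * ((1 - x) ^ Suc w * (real k * x ^ (k - 1))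
        - real (Suc w) * (1 - x) ^ w * x ^ k)))"
    unfolding negbin_cdf_deriv_eq[symmetric] sum_distrib_left by (simp only: mult.assoc mult.left_commute)
  also have "\<dots> = (\<Sum>k<Suc w. (1 - x) * (real ((w + k) choose k) * (1 - x) ^ Suc w * x ^ k * real k)
      - real (Suc w) * x * (real ((w + k) choose k) * (1 - x) ^ Suc w * x ^ k))"
    unfolding summand by (intro sum.cong refl) (simp only: algebra_simps)
  also have "\<dots> = (1 - x) * negbin_partial_mean w x - real (Suc w) * x * negbin_cdf w x"
    unfolding negbin_partial_mean_def negbin_cdf_def sum_subtractf sum_distrib_left ..
  finally show ?thesis
    by (simp add: algebra_simps)
qed

section \<open>The random walk of official and secret blocks\<close>

definition stopped :: "nat \<Rightarrow> nat \<Rightarrow> nat \<Rightarrow> nat \<Rightarrow> bool" where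
  "stopped A z n m \<longleftrightarrow> int A \<le> int n - int m \<or> (z \<le> n \<and> n < m)"

text \<open>The mean of \<open>min N k\<close>, where \<open>N\<close> is the number of blocks found until the attack
  cycle started with \<open>n\<close> official and \<open>m\<close> secret blocks ends, each block being honest
  with probability \<open>p\<close>.\<close>
fun mean_steps_upto :: "real \<Rightarrow> real \<Rightarrow> nat \<Rightarrow> nat \<Rightarrow> nat \<Rightarrow> nat \<Rightarrow> nat \<Rightarrow> real" where
  "mean_steps_upto p q A z 0 n m = 0"
| "mean_steps_upto p q A z (Suc k) n m = (if stopped A z n m then 0
     else 1 + p * mean_steps_upto p q A z k (Suc n) m + q * mean_steps_upto p q A z k n (Suc m))"

lemma mean_steps_upto_nonneg: "0 \<le> p \<Longrightarrow> 0 \<le> q \<Longrightarrow> 0 \<le> mean_steps_upto p q A z k n m"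
  by (induction k arbitrary: n m) auto

definition nb_coeff :: "nat \<Rightarrow> nat \<Rightarrow> real" where
  "nb_coeff r k = (if r = 0 then (if k = 0 then 1 else 0) else real ((r - 1 + k) choose k))"

lemma nb_coeff_0 [simp]: "nb_coeff r 0 = 1"
  by (simp add: nb_coeff_def)

lemma nb_coeff_Suc:
  assumes "1 \<le> r"
  shows "nb_coeff r (Suc k) = nb_coeff (r - 1) (Suc k) + nb_coeff r k"
proof (cases "r = 1")
  case False
  with assms obtain r' where "r = Suc (Suc r')"
    by (metis Suc_le_D le_antisym not0_implies_Suc not_less_eq_eq One_nat_def)
  then show ?thesis by (simp add: nb_coeff_def)
qed (simp add: nb_coeff_def)

locale block_walk =
  fixes p q :: real and A z :: nat
  assumes p_plus_q: "p + q = 1" and q_pos: "0 < q" and q_less_p: "q < p"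
    and z_pos: "1 \<le> z" and z_le_A: "z \<le> A"
begin

abbreviation steps_upto :: "nat \<Rightarrow> nat \<Rightarrow> nat \<Rightarrow> real" where
  "steps_upto \<equiv> mean_steps_upto p q A z"

lemma p_pos: "0 < p"
  using q_pos q_less_p by simp

lemma one_minus_q: "1 - q = p" and one_minus_p: "1 - p = q"
  using p_plus_q by auto

definition lam :: real where
  "lam = q / p"

lemma lam_pos: "0 < lam" and lam_less_1: "lam < 1"
  using q_pos p_pos q_less_p by (auto simp: lam_def)

lemma lam_power_less_1: "0 < 1 - lam ^ Suc A"
  using power_Suc_less_one[OF lam_pos lam_less_1, of A] by simp

lemma lam_power_rec: "lam ^ Suc j = p * lam ^ Suc (Suc j) + q * lam ^ j"
proof -
  have "p * lam * lam + q = q * (q + p) / p"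
    unfolding lam_def using p_pos by (simp add: field_simps)
  then have "p * lam * lam + q = lam"
    using p_plus_q unfolding lam_def by (simp add: add.commute)
  moreover have "p * lam ^ Suc (Suc j) + q * lam ^ j = lam ^ j * (p * lam * lam + q)"
    by (simp add: algebra_simps)
  ultimately show ?thesis
    by simp
qed

text \<open>Expected duration of the gambler's ruin on \<open>{0..A+1}\<close> started at \<open>i\<close>, stepping up
  with probability \<open>p\<close>; \<open>i\<close> is the lag plus one.\<close>
definition ruin_steps :: "nat \<Rightarrow> real" where
  "ruin_steps i = (real (Suc A) * (1 - lam ^ i) / (1 - lam ^ Suc A) - real i) / (p - q)"

lemma ruin_steps_0: "ruin_steps 0 = 0" and ruin_steps_top: "ruin_steps (Suc A) = 0"
  using lam_power_less_1 by (auto simp: ruin_steps_def)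

lemma ruin_steps_rec: "ruin_steps (Suc j) = 1 + p * ruin_steps (Suc (Suc j)) + q * ruin_steps j"
proof -
  define c where "c = real (Suc A) / (1 - lam ^ Suc A)"
  define h where "h i = c * (1 - lam ^ i) - real i" for i
  have h_rec: "(p - q) + p * h (Suc (Suc j)) + q * h j = h (Suc j)"
  proof -
    have "p * h (Suc (Suc j)) + q * h j
        = c * (p + q) - c * (p * lam ^ Suc (Suc j) + q * lam ^ j) - ((p + q) * real j + 2 * p)"
      unfolding h_def by (simp add: algebra_simps)
    then show ?thesis
      unfolding lam_power_rec[symmetric] p_plus_q h_def using p_plus_q by (simp add: algebra_simps)
  qed
  have as_h: "ruin_steps i = h i / (p - q)" for i
    unfolding ruin_steps_def h_def c_def by simp
  have "p - q \<noteq> 0"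
    using q_less_p by simp
  then have "1 + p * (h (Suc (Suc j)) / (p - q)) + q * (h j / (p - q))
      = ((p - q) + p * h (Suc (Suc j)) + q * h j) / (p - q)"
    by (simp only: add_divide_distrib times_divide_eq_right divide_self_if if_False)
  then show ?thesis
    unfolding as_h h_rec by simp
qed

definition ruin_bound :: real where
  "ruin_bound = (real (Suc A) * 2 / (1 - lam ^ Suc A) + real (Suc A)) / (p - q)"

lemma ruin_steps_bound:
  assumes "i \<le> Suc A"
  shows "\<bar>ruin_steps i\<bar> \<le> ruin_bound"
proof -
  have lam_i: "0 \<le> lam ^ i" "lam ^ i \<le> 1"
    using lam_pos lam_less_1 by (auto simp: power_le_one)
  have "0 \<le> real (Suc A) * (1 - lam ^ i) / (1 - lam ^ Suc A)"
    using lam_i lam_power_less_1 by simp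
  moreover have "real (Suc A) * (1 - lam ^ i) / (1 - lam ^ Suc A) \<le> real (Suc A) * 2 / (1 - lam ^ Suc A)"
    using lam_i lam_power_less_1 by (intro divide_right_mono mult_left_mono) auto
  ultimately have "\<bar>real (Suc A) * (1 - lam ^ i) / (1 - lam ^ Suc A) - real i\<bar>
      \<le> real (Suc A) * 2 / (1 - lam ^ Suc A) + real (Suc A)"
    using assms by linarith
  then show ?thesis
    unfolding ruin_steps_def ruin_bound_def using q_less_p by (simp add: abs_div divide_right_mono)
qed

lemma ruin_bound_nonneg: "0 \<le> ruin_bound"
  using ruin_steps_bound[of 0] by simp

definition lag_steps :: "int \<Rightarrow> real" where
  "lag_steps d = ruin_steps (nat (d + 1))"

lemma lag_steps_minus_1: "lag_steps (-1) = 0" and lag_steps_A: "lag_steps (int A) = 0"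
  by (simp_all add: lag_steps_def ruin_steps_0 ruin_steps_top nat_add_distrib)

lemma lag_steps_rec:
  assumes "0 \<le> d"
  shows "lag_steps d = 1 + p * lag_steps (d + 1) + q * lag_steps (d - 1)"
proof -
  obtain j where "d = int j"
    using assms nonneg_int_cases by blast
  then show ?thesis
    using ruin_steps_rec[of j] by (simp add: lag_steps_def nat_add_distrib)
qed

text \<open>Only the lags \<open>0 \<le> d < A\<close> occur before the end of the cycle; cutting off the
  others keeps \<open>lag_steps_mix\<close> bounded.\<close>
definition lag_steps_cut :: "int \<Rightarrow> real" where
  "lag_steps_cut d = (if 0 \<le> d \<and> d < int A then lag_steps d else 0)"

lemma lag_steps_cut_bound: "\<bar>lag_steps_cut d\<bar> \<le> ruin_bound"
  unfolding lag_steps_cut_def lag_steps_def using ruin_bound_nonneg by (auto intro!: ruin_steps_bound)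

text \<open>The mean of \<open>lag_steps_cut (s - K)\<close>, where \<open>K\<close> is the number of secret blocks found
  before the next \<open>r\<close> official ones.\<close>
definition lag_steps_mix :: "nat \<Rightarrow> int \<Rightarrow> real" where
  "lag_steps_mix r s = (\<Sum>k\<le>nat s. nb_coeff r k * p ^ r * q ^ k * lag_steps_cut (s - int k))"

lemma lag_steps_mix_neg: "s < 0 \<Longrightarrow> lag_steps_mix r s = 0"
  by (simp add: lag_steps_mix_def lag_steps_cut_def)

lemma lag_steps_mix_0: "lag_steps_mix 0 s = lag_steps_cut s"
proof (cases "s < 0")
  case True
  then show ?thesis by (simp add: lag_steps_mix_neg lag_steps_cut_def)
next
  case False
  have "lag_steps_mix 0 s = (\<Sum>k\<le>nat s. if k = 0 then lag_steps_cut s else 0)"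
    unfolding lag_steps_mix_def by (intro sum.cong refl) (simp add: nb_coeff_def)
  then show ?thesis by simp
qed

lemma lag_steps_mix_rec:
  assumes r: "1 \<le> r"
  shows "lag_steps_mix r s = p * lag_steps_mix (r - 1) s + q * lag_steps_mix r (s - 1)"
proof (cases "s \<le> 0")
  case True
  have "p * p ^ (r - 1) = p ^ r"
    using r by (simp add: power_eq_if)
  with True show ?thesis
    by (cases "s = 0") (simp_all add: lag_steps_mix_def lag_steps_mix_neg lag_steps_cut_def)
next
  case False
  define n where "n = nat s - 1"
  have n: "nat s = Suc n" "nat (s - 1) = n"
    using False by (simp_all add: n_def nat_diff_distrib)
  have p_r: "p * p ^ (r - 1) = p ^ r"
    using r by (simp add: power_eq_if)
  define t where "t r' k = nb_coeff r' (Suc k) * p ^ r * q ^ Suc k * lag_steps_cut (s - 1 - int k)" for r' k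
  have "lag_steps_mix r s = p ^ r * lag_steps_cut s + (\<Sum>k\<le>n. t r k)"
    unfolding lag_steps_mix_def n sum.atMost_Suc_shift t_def by (simp add: algebra_simps)
  also have "\<dots> = p ^ r * lag_steps_cut s + (\<Sum>k\<le>n. t (r - 1) k)
      + (\<Sum>k\<le>n. nb_coeff r k * p ^ r * q ^ Suc k * lag_steps_cut (s - 1 - int k))"
    unfolding t_def nb_coeff_Suc[OF r] by (simp add: algebra_simps sum.distrib)
  also have "p ^ r * lag_steps_cut s + (\<Sum>k\<le>n. t (r - 1) k) = p * lag_steps_mix (r - 1) s"
    unfolding lag_steps_mix_def n sum.atMost_Suc_shift t_def p_r[symmetric]
    by (simp add: algebra_simps sum_distrib_left)
  also have "(\<Sum>k\<le>n. nb_coeff r k * p ^ r * q ^ Suc k * lag_steps_cut (s - 1 - int k))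
      = q * lag_steps_mix r (s - 1)"
    unfolding lag_steps_mix_def n by (simp add: algebra_simps sum_distrib_left)
  finally show ?thesis .
qed

lemma lag_steps_mix_bound: "\<bar>lag_steps_mix r s\<bar> \<le> ruin_bound"
proof (induction r arbitrary: s)
  case 0
  then show ?case by (simp add: lag_steps_mix_0 lag_steps_cut_bound)
next
  case (Suc r)
  have "s < int n \<Longrightarrow> \<bar>lag_steps_mix (Suc r) s\<bar> \<le> ruin_bound" for n s
  proof (induction n arbitrary: s)
    case 0
    then show ?case using ruin_bound_nonneg by (simp add: lag_steps_mix_neg)
  next
    case (Suc n)
    have "\<bar>lag_steps_mix (Suc r) s\<bar> = \<bar>p * lag_steps_mix r s + q * lag_steps_mix (Suc r) (s - 1)\<bar>"
      using lag_steps_mix_rec[of "Suc r" s] by simp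
    also have "\<dots> \<le> p * \<bar>lag_steps_mix r s\<bar> + q * \<bar>lag_steps_mix (Suc r) (s - 1)\<bar>"
      using p_pos q_pos by (simp add: abs_triangle_ineq[THEN order_trans] abs_mult)
    also have "\<dots> \<le> p * ruin_bound + q * ruin_bound"
      using Suc p_pos q_pos \<open>\<And>s. \<bar>lag_steps_mix r s\<bar> \<le> ruin_bound\<close>
      by (intro add_mono mult_left_mono) auto
    finally show ?case
      using p_plus_q by (simp add: distrib_right[symmetric])
  qed
  moreover have "s < int (Suc (nat s))"
    by simp
  ultimately show ?case
    by blast
qed

text \<open>On average \<open>r / p\<close> blocks are needed for \<open>r\<close> more official ones.\<close>
definition early_steps :: "nat \<Rightarrow> int \<Rightarrow> real" where
  "early_steps r d = real r / p + lag_steps_mix r (d + int r)"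

lemma early_steps_0: "early_steps 0 d = lag_steps_cut d"
  by (simp add: early_steps_def lag_steps_mix_0)

lemma early_steps_rec:
  assumes r: "1 \<le> r"
  shows "early_steps r d = 1 + p * early_steps (r - 1) (d + 1) + q * early_steps r (d - 1)"
proof -
  have mix: "lag_steps_mix r (d + int r)
      = p * lag_steps_mix (r - 1) (d + 1 + int (r - 1)) + q * lag_steps_mix r (d - 1 + int r)"
    using lag_steps_mix_rec[OF r, of "d + int r"] r by (simp add: of_nat_diff algebra_simps)
  have "real r = p * real r + q * real r"
    using p_plus_q by (simp flip: distrib_right)
  then have "real r / p = 1 + p * (real (r - 1) / p) + q * (real r / p)"
    using p_pos r by (simp add: field_simps of_nat_diff)
  then show ?thesis
    unfolding early_steps_def mix distrib_left by linarith
qed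

text \<open>The explicit solution of the recurrence of \<open>mean_steps_upto\<close>: before \<open>z\<close> official
  blocks the cycle cannot end (the lag stays below \<open>z \<le> A\<close>), and from then on the lag
  performs a gambler's ruin between \<open>-1\<close> and \<open>A\<close>.\<close>
definition mean_steps :: "nat \<Rightarrow> nat \<Rightarrow> real" where
  "mean_steps n m = (if stopped A z n m then 0
     else if z \<le> n then lag_steps (int n - int m) else early_steps (z - n) (int n - int m))"

lemma mean_steps_rec_late:
  assumes "\<not> stopped A z n m" "z \<le> n"
  shows "mean_steps n m = 1 + p * mean_steps (Suc n) m + q * mean_steps n (Suc m)"
proof -
  have d: "0 \<le> int n - int m" "int n - int m < int A"
    using assms by (auto simp: stopped_def)
  have "mean_steps (Suc n) m = lag_steps (int n - int m + 1)"
    using assms d lag_steps_A by (cases "int n - int m + 1 = int A") (auto simp: mean_steps_def stopped_def algebra_simps)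
  moreover have "mean_steps n (Suc m) = lag_steps (int n - int m - 1)"
    using assms d lag_steps_minus_1 by (cases "int n - int m = 0") (auto simp: mean_steps_def stopped_def algebra_simps)
  ultimately show ?thesis
    using assms lag_steps_rec[OF d(1)] by (simp add: mean_steps_def[of n m])
qed

lemma mean_steps_rec_early:
  assumes "n < z"
  shows "mean_steps n m = 1 + p * mean_steps (Suc n) m + q * mean_steps n (Suc m)"
proof -
  have not_stopped: "\<not> stopped A z n m" "\<not> stopped A z n (Suc m)"
    using assms z_le_A by (auto simp: stopped_def)
  have "mean_steps (Suc n) m = early_steps (z - n - 1) (int n - int m + 1)"
  proof (cases "Suc n = z")
    case True
    then show ?thesis by (auto simp: mean_steps_def early_steps_0 lag_steps_cut_def stopped_def algebra_simps)
  next
    case False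
    with assms have "\<not> stopped A z (Suc n) m" "Suc n < z"
      using z_le_A by (auto simp: stopped_def)
    then show ?thesis by (simp add: mean_steps_def algebra_simps Suc_diff_Suc)
  qed
  moreover have "mean_steps n (Suc m) = early_steps (z - n) (int n - int m - 1)"
    using assms not_stopped by (simp add: mean_steps_def algebra_simps)
  ultimately show ?thesis
    using assms not_stopped early_steps_rec[of "z - n" "int n - int m"] by (simp add: mean_steps_def[of n m])
qed

lemma mean_steps_rec:
  assumes "\<not> stopped A z n m"
  shows "mean_steps n m = 1 + p * mean_steps (Suc n) m + q * mean_steps n (Suc m)"
proof (cases "z \<le> n")
  case True
  with assms show ?thesis
    by (rule mean_steps_rec_late)
next
  case False
  then show ?thesis
    by (intro mean_steps_rec_early) simp
qed

definition steps_bound :: real where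
  "steps_bound = real z / p + ruin_bound"

lemma steps_bound_nonneg: "0 \<le> steps_bound"
  using ruin_bound_nonneg p_pos by (simp add: steps_bound_def)

lemma mean_steps_bound: "\<bar>mean_steps n m\<bar> \<le> steps_bound"
proof -
  have "\<bar>early_steps (z - n) d\<bar> \<le> real (z - n) / p + \<bar>lag_steps_mix (z - n) (d + int (z - n))\<bar>" for d
    unfolding early_steps_def using p_pos by (simp add: abs_triangle_ineq[THEN order_trans])
  also have "\<dots> d \<le> steps_bound" for d
    unfolding steps_bound_def using lag_steps_mix_bound p_pos by (intro add_mono divide_right_mono) auto
  finally have early: "\<bar>early_steps (z - n) d\<bar> \<le> steps_bound" for d .
  have late: "\<bar>lag_steps d\<bar> \<le> steps_bound" if "0 \<le> d" "d < int A" for d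
  proof -
    have "\<bar>lag_steps d\<bar> \<le> ruin_bound"
      unfolding lag_steps_def using that by (intro ruin_steps_bound) auto
    then show ?thesis
      unfolding steps_bound_def using p_pos by (simp add: add_increasing)
  qed
  show ?thesis
  proof (cases "stopped A z n m \<or> \<not> z \<le> n")
    case True
    then show ?thesis
      using early steps_bound_nonneg by (auto simp: mean_steps_def)
  next
    case False
    then have "0 \<le> int n - int m" "int n - int m < int A"
      by (auto simp: stopped_def)
    with False show ?thesis
      using late by (simp add: mean_steps_def)
  qed
qed

lemma steps_upto_increment:
  "0 \<le> steps_upto (Suc k) n m - steps_upto k n m \<and> steps_upto (Suc k) n m - steps_upto k n m \<le> 1"
proof (induction k arbitrary: n m)
  case 0
  then show ?case by simp
next
  case (Suc k)
  have "p * (steps_upto (Suc k) (Suc n) m - steps_upto k (Suc n) m)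
      + q * (steps_upto (Suc k) n (Suc m) - steps_upto k n (Suc m)) \<le> p * 1 + q * 1"
    using Suc p_pos q_pos by (intro add_mono mult_left_mono) auto
  moreover have "0 \<le> p * (steps_upto (Suc k) (Suc n) m - steps_upto k (Suc n) m)
      + q * (steps_upto (Suc k) n (Suc m) - steps_upto k n (Suc m))"
    using Suc p_pos q_pos by simp
  ultimately show ?case
    using p_plus_q by (simp add: algebra_simps)
qed

lemma mean_steps_approx:
  "\<bar>mean_steps n m - steps_upto k n m\<bar> \<le> steps_bound * (steps_upto (Suc k) n m - steps_upto k n m)"
proof (induction k arbitrary: n m)
  case 0
  then show ?case
    by (cases "stopped A z n m") (simp add: mean_steps_def, simp add: mean_steps_bound)
next
  case (Suc k)
  show ?case
  proof (cases "stopped A z n m")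
    case True
    then show ?thesis by (simp add: mean_steps_def)
  next
    case False
    let ?err = "\<lambda>n m. \<bar>mean_steps n m - steps_upto k n m\<bar>"
    let ?inc = "\<lambda>n m. steps_upto (Suc k) n m - steps_upto k n m"
    have "mean_steps n m - steps_upto (Suc k) n m
        = p * (mean_steps (Suc n) m - steps_upto k (Suc n) m) + q * (mean_steps n (Suc m) - steps_upto k n (Suc m))"
      using mean_steps_rec[OF False] False by (simp add: algebra_simps)
    then have "\<bar>mean_steps n m - steps_upto (Suc k) n m\<bar> \<le> p * ?err (Suc n) m + q * ?err n (Suc m)"
      using p_pos q_pos by (simp add: abs_triangle_ineq[THEN order_trans] abs_mult)
    also have "\<dots> \<le> p * (steps_bound * ?inc (Suc n) m) + q * (steps_bound * ?inc n (Suc m))"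
      using Suc p_pos q_pos by (intro add_mono mult_left_mono) auto
    also have "\<dots> = steps_bound * (steps_upto (Suc (Suc k)) n m - steps_upto (Suc k) n m)"
      using False by (simp add: algebra_simps)
    finally show ?thesis .
  qed
qed

lemma incseq_steps_upto: "incseq (\<lambda>k. steps_upto k n m)"
  using steps_upto_increment by (intro incseq_SucI) (simp add: algebra_simps)

lemma steps_upto_tendsto: "(\<lambda>k. steps_upto k n m) \<longlonglongrightarrow> mean_steps n m"
proof -
  have "steps_upto k n m \<le> mean_steps n m + steps_bound" for k
    using mean_steps_approx[of n m k] steps_upto_increment[of k n m] steps_bound_nonneg
    by (smt (verit, best) abs_le_iff mult_left_le)
  then obtain L where L: "(\<lambda>k. steps_upto k n m) \<longlonglongrightarrow> L"
    using incseq_convergent[OF incseq_steps_upto] by blast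
  then have "(\<lambda>k. steps_upto (Suc k) n m - steps_upto k n m) \<longlonglongrightarrow> L - L"
    by (intro tendsto_diff LIMSEQ_Suc)
  then have "(\<lambda>k. steps_bound * (steps_upto (Suc k) n m - steps_upto k n m)) \<longlonglongrightarrow> 0"
    by (simp add: tendsto_mult_right_zero)
  then have "(\<lambda>k. mean_steps n m - steps_upto k n m) \<longlonglongrightarrow> 0"
    by (rule Lim_null_comparison[rotated], intro always_eventually allI)
      (simp only: real_norm_def mean_steps_approx)
  from tendsto_diff[OF tendsto_const[of "mean_steps n m"] this] show ?thesis
    by simp
qed

lemma mean_steps_nonneg: "0 \<le> mean_steps n m"
proof -
  have "0 \<le> steps_upto k n m" for k
    using incseqD[OF incseq_steps_upto, of 0 k] by simp
  then show ?thesis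
    using steps_upto_tendsto[of n m] by (intro LIMSEQ_le_const) auto
qed

lemma SUP_ennreal_steps_upto:
  assumes "0 \<le> c"
  shows "(SUP k. ennreal (c * steps_upto k n m)) = ennreal (c * mean_steps n m)"
proof (rule LIMSEQ_unique)
  show "(\<lambda>k. ennreal (c * steps_upto k n m)) \<longlonglongrightarrow> (SUP k. ennreal (c * steps_upto k n m))"
    using assms incseq_steps_upto[of n m]
    by (intro LIMSEQ_SUP) (auto simp: incseq_def intro!: ennreal_leI mult_left_mono)
  show "(\<lambda>k. ennreal (c * steps_upto k n m)) \<longlonglongrightarrow> ennreal (c * mean_steps n m)"
    by (intro tendsto_ennrealI tendsto_mult tendsto_const steps_upto_tendsto)
qed

definition nb_weight :: "nat \<Rightarrow> nat \<Rightarrow> real" where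
  "nb_weight w k = real ((w + k) choose k) * p ^ Suc w * q ^ k"

lemma mean_steps_start:
  assumes z: "z = Suc w"
  shows "mean_steps 0 1 = real z / p + (\<Sum>k\<le>w. nb_weight w k * ruin_steps (z - k))"
proof -
  have "lag_steps_cut (int w - int k) = ruin_steps (z - k)" if "k \<le> w" for k
  proof -
    have "int w - int k + 1 = int (z - k)"
      using that z by simp
    then have nat_eq: "nat (int w - int k + 1) = z - k"
      by simp
    have "0 \<le> int w - int k \<and> int w - int k < int A"
      using that z z_le_A by simp
    then show ?thesis
      unfolding lag_steps_cut_def lag_steps_def nat_eq by simp
  qed
  then have "lag_steps_mix z (int w) = (\<Sum>k\<le>w. nb_weight w k * ruin_steps (z - k))"
    unfolding lag_steps_mix_def nat_int by (intro sum.cong refl) (simp add: nb_coeff_def nb_weight_def z)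
  moreover have "mean_steps 0 1 = early_steps z (-1)"
    using z_pos by (simp add: mean_steps_def stopped_def)
  ultimately show ?thesis
    by (simp add: early_steps_def z)
qed

lemma sum_nb_weight: "(\<Sum>k\<le>w. nb_weight w k) = negbin_cdf w q"
  unfolding nb_weight_def negbin_cdf_def one_minus_q lessThan_Suc_atMost ..

lemma sum_nb_weight_lam_power: "(\<Sum>k\<le>w. nb_weight w k * lam ^ (Suc w - k)) = 1 - negbin_cdf w q"
proof -
  have "nb_weight w k * lam ^ (Suc w - k) = real ((w + k) choose k) * (1 - p) ^ Suc w * p ^ k" if "k \<le> w" for k
  proof -
    have "p ^ Suc w = p ^ k * p ^ (Suc w - k)" "q ^ Suc w = q ^ k * q ^ (Suc w - k)"
      using that by (simp_all flip: power_add)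
    then show ?thesis
      unfolding nb_weight_def lam_def one_minus_p using p_pos by (simp add: power_divide field_simps)
  qed
  then have "(\<Sum>k\<le>w. nb_weight w k * lam ^ (Suc w - k)) = negbin_cdf w p"
    unfolding negbin_cdf_def lessThan_Suc_atMost by (intro sum.cong refl) simp
  then show ?thesis
    using negbin_cdf_reflect[of w q] unfolding one_minus_q by simp
qed

lemma sum_nb_weight_diff:
  "(\<Sum>k\<le>w. nb_weight w k * real (Suc w - k)) = real (Suc w) * negbin_cdf w q - negbin_partial_mean w q"
proof -
  have "(\<Sum>k\<le>w. nb_weight w k * real (Suc w - k)) = (\<Sum>k\<le>w. real (Suc w) * nb_weight w k - nb_weight w k * real k)"
    by (intro sum.cong refl) (simp add: of_nat_diff algebra_simps)
  then show ?thesis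
    unfolding sum_subtractf sum_distrib_left[symmetric] sum_nb_weight
    by (simp add: negbin_partial_mean_def nb_weight_def one_minus_q lessThan_Suc_atMost)
qed

lemma mean_steps_start_eq:
  "mean_steps 0 1 = (A + 1) / (p - q) * (1 / (1 - lam ^ (A + 1)))
     - p ^ (z - 1) * q ^ z / ((p - q) * beta_fn z z)
     + (z / p - 2 * (A + 1) / ((p - q) * (1 - lam ^ (A + 1)))) * inc_beta q z z"
proof -
  obtain w where z: "z = Suc w"
    using z_pos by (cases z) auto
  define K where "K = real (Suc A) / (1 - lam ^ Suc A)"
  define S where "S = negbin_cdf w q"
  define T where "T = negbin_partial_mean w q"
  define c where "c = beta_norm w"
  have T_part: "(T - real z * S) / (p - q) = - (real z * S / p) - c * p ^ w * q ^ z / (p - q)"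
  proof -
    have "p * T = real z * q * S - c * q ^ z * p ^ z"
      using negbin_partial_mean_eq[of q w] unfolding T_def S_def c_def one_minus_q z .
    then have "T - real z * S = (p - q) * (- (real z * S / p)) - c * p ^ w * q ^ z"
      using p_pos by (simp add: z field_simps)
    then show ?thesis
      using q_less_p by (simp add: diff_divide_distrib)
  qed
  have "mean_steps 0 1 = real z / p + (\<Sum>k\<le>w. (K * nb_weight w k - K * (nb_weight w k * lam ^ (z - k))
      - nb_weight w k * real (z - k)) / (p - q))"
    unfolding mean_steps_start[OF z] ruin_steps_def K_def
    by (intro arg_cong2[where f="(+)"] refl sum.cong) (simp_all add: algebra_simps diff_divide_distrib)
  also have "\<dots> = real z / p + (K * S - K * (1 - S) - (real z * S - T)) / (p - q)"
    unfolding sum_divide_distrib[symmetric] sum_subtractf sum_distrib_left[symmetric] z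
      sum_nb_weight sum_nb_weight_lam_power sum_nb_weight_diff S_def T_def ..
  also have "K * S - K * (1 - S) - (real z * S - T) = (2 * K * S - K) + (T - real z * S)"
    by (simp add: algebra_simps)
  also have "real z / p + (2 * K * S - K + (T - real z * S)) / (p - q)
      = real z / p + (2 * K * S - K) / (p - q) + (T - real z * S) / (p - q)"
    by (simp only: add_divide_distrib add.assoc)
  also have "\<dots> = K / (p - q) - c * p ^ w * q ^ z / (p - q) + (real z / p - 2 * K / (p - q)) * (1 - S)"
    unfolding T_part by (simp add: divide_inverse algebra_simps)
  finally show ?thesis
    using beta_fn_Suc_Suc[of w] inc_beta_Suc_Suc[of q w] q_pos
    by (simp add: z K_def S_def c_def ac_simps)
qed

end

section \<open>Exponential races\<close>

lemma prob_space_exp_dist: "0 < l \<Longrightarrow> prob_space (exp_dist l)"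
  unfolding exp_dist_def by (rule prob_space_exponential_density)

lemma sets_exp_dist [simp, measurable_cong]: "sets (exp_dist l) = sets borel"
  unfolding exp_dist_def by simp

lemma space_exp_dist [simp]: "space (exp_dist l) = UNIV"
  unfolding exp_dist_def by simp

lemma space_stream_space_exp_dist [simp]: "space (stream_space (exp_dist l)) = UNIV"
  by (simp add: space_stream_space streams_UNIV)

lemma sets_stream_space_exp_dist [measurable_cong]:
  "sets (stream_space (exp_dist l)) = sets (stream_space borel)"
  by (rule sets_stream_space_cong) simp

lemma nn_integral_exp_dist:
  assumes [measurable]: "f \<in> borel_measurable borel"
  shows "(\<integral>\<^sup>+x. f x \<partial>exp_dist l) = (\<integral>\<^sup>+x. ennreal (exponential_density l x) * f x \<partial>lborel)"
  unfolding exp_dist_def by (subst nn_integral_density) auto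

lemma AE_exp_dist_neq: "AE y in exp_dist b. y \<noteq> x"
  unfolding exp_dist_def by (subst AE_density) (auto intro: AE_mp[OF AE_lborel_singleton[of x]])

lemma AE_exp_dist_pos: "AE x in exp_dist l. 0 < x"
  unfolding exp_dist_def
  by (subst AE_density) (auto simp: erlang_density_def intro: AE_mp[OF AE_lborel_singleton[of 0]])

lemma exponential_density_shift:
  "0 \<le> x \<Longrightarrow> 0 < v \<Longrightarrow> exponential_density b (x + v) = exp (- x * b) * exponential_density b v"
  by (simp add: erlang_density_def algebra_simps exp_add[symmetric])

lemma exponential_density_times_exp:
  assumes "0 < a" "0 < b"
  shows "exponential_density a x * exp (- x * b) = a / (a + b) * exponential_density (a + b) x"
proof (cases "x < 0")
  case False
  then have "exponential_density a x * exp (- x * b) = a * exp (- x * (a + b))"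
    by (simp add: erlang_density_def algebra_simps exp_add[symmetric])
  also have "\<dots> = a / (a + b) * ((a + b) * exp (- x * (a + b)))"
    using assms by simp
  also have "\<dots> = a / (a + b) * exponential_density (a + b) x"
    using False by (simp add: erlang_density_def algebra_simps)
  finally show ?thesis .
qed (simp add: erlang_density_def)

lemma nn_integral_exp_dist_id:
  assumes "0 < l"
  shows "(\<integral>\<^sup>+x. ennreal x \<partial>exp_dist l) = ennreal (1 / l)"
proof -
  have "(\<integral>\<^sup>+x. ennreal x \<partial>exp_dist l) = (\<integral>\<^sup>+x. ennreal (exponential_density l x * x ^ 1) \<partial>lborel)"
    by (auto simp: nn_integral_exp_dist erlang_density_def ennreal_mult'' ennreal_neg intro!: nn_integral_cong)
  then show ?thesis
    using nn_integral_erlang_ith_moment[OF assms, of 0 1] by simp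
qed

lemma nn_integral_exp_dist_exp:
  assumes "0 < l"
  shows "(\<integral>\<^sup>+x. ennreal (exp (- x)) \<partial>exp_dist l) = ennreal (l / (l + 1))"
proof -
  interpret E: prob_space "exp_dist (l + 1)"
    using assms by (intro prob_space_exp_dist) simp
  have "ennreal (exponential_density l x) * ennreal (exp (- x))
      = ennreal (l / (l + 1)) * ennreal (exponential_density (l + 1) x)" for x
    using exponential_density_times_exp[OF assms, of 1 x] assms
    by (simp add: ennreal_mult[symmetric] erlang_density_def)
  then have "(\<integral>\<^sup>+x. ennreal (exp (- x)) \<partial>exp_dist l)
      = ennreal (l / (l + 1)) * (\<integral>\<^sup>+x. ennreal (exponential_density (l + 1) x) * 1 \<partial>lborel)"
    by (simp add: nn_integral_exp_dist nn_integral_cmult)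
  also have "(\<integral>\<^sup>+x. ennreal (exponential_density (l + 1) x) * 1 \<partial>lborel) = 1"
    using E.emeasure_space_1 nn_integral_exp_dist[of "\<lambda>_. 1" "l + 1"] by simp
  finally show ?thesis
    by simp
qed

lemma nn_integral_exp_dist_memoryless:
  fixes f :: "real \<Rightarrow> ennreal"
  assumes x: "0 \<le> x" and [measurable]: "f \<in> borel_measurable borel"
  shows "(\<integral>\<^sup>+y. (if x < y then f y else 0) \<partial>exp_dist b)
    = ennreal (exp (- x * b)) * (\<integral>\<^sup>+v. f (x + v) \<partial>exp_dist b)"
proof -
  have "(\<integral>\<^sup>+y. (if x < y then f y else 0) \<partial>exp_dist b)
      = (\<integral>\<^sup>+v. ennreal (exponential_density b (x + 1 * v)) * (if x < x + 1 * v then f (x + 1 * v) else 0) \<partial>lborel)"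
    using nn_integral_real_affine[of "\<lambda>y. ennreal (exponential_density b y) * (if x < y then f y else 0)" 1 x]
    by (simp add: nn_integral_exp_dist)
  also have "\<dots> = (\<integral>\<^sup>+v. ennreal (exp (- x * b)) * (ennreal (exponential_density b v) * f (x + v)) \<partial>lborel)"
  proof (rule nn_integral_cong_AE)
    show "AE v in lborel. ennreal (exponential_density b (x + 1 * v)) * (if x < x + 1 * v then f (x + 1 * v) else 0)
        = ennreal (exp (- x * b)) * (ennreal (exponential_density b v) * f (x + v))"
      using AE_lborel_singleton[of 0]
    proof eventually_elim
      case (elim v)
      then show ?case
        using exponential_density_shift[OF x, of v b]
        by (cases "0 < v") (simp_all add: ennreal_mult' mult.assoc erlang_density_def)
    qed
  qed
  also have "\<dots> = ennreal (exp (- x * b)) * (\<integral>\<^sup>+v. f (x + v) \<partial>exp_dist b)"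
    by (simp add: nn_integral_cmult nn_integral_exp_dist)
  finally show ?thesis .
qed

lemma nn_integral_exp_race_first:
  fixes g :: "real \<Rightarrow> real \<Rightarrow> ennreal"
  assumes a: "0 < a" and b: "0 < b"
    and [measurable]: "case_prod g \<in> borel_measurable (borel \<Otimes>\<^sub>M borel)"
  shows "(\<integral>\<^sup>+x. \<integral>\<^sup>+y. (if x < y then g x y else 0) \<partial>exp_dist b \<partial>exp_dist a)
    = ennreal (a / (a + b)) * (\<integral>\<^sup>+u. \<integral>\<^sup>+v. g u (u + v) \<partial>exp_dist b \<partial>exp_dist (a + b))"
proof -
  interpret B: prob_space "exp_dist b"
    using b by (rule prob_space_exp_dist)
  have "(\<lambda>(x, y). if x < y then g x y else 0) \<in> borel_measurable (borel \<Otimes>\<^sub>M exp_dist b)"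
    by measurable
  then have [measurable]: "(\<lambda>x. \<integral>\<^sup>+y. (if x < y then g x y else 0) \<partial>exp_dist b) \<in> borel_measurable borel"
    by (rule B.borel_measurable_nn_integral)
  have "ennreal (exponential_density a x) * (\<integral>\<^sup>+y. (if x < y then g x y else 0) \<partial>exp_dist b)
      = ennreal (a / (a + b)) * (ennreal (exponential_density (a + b) x) * (\<integral>\<^sup>+v. g x (x + v) \<partial>exp_dist b))" for x
  proof (cases "0 \<le> x")
    case True
    have "ennreal (exponential_density a x) * ennreal (exp (- x * b))
        = ennreal (a / (a + b)) * ennreal (exponential_density (a + b) x)"
      using exponential_density_times_exp[OF a b, of x] a b True
      by (simp add: ennreal_mult'[symmetric] ennreal_mult[symmetric])
    then show ?thesis
      using True by (simp add: nn_integral_exp_dist_memoryless mult.assoc[symmetric])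
  qed (simp add: erlang_density_def)
  then show ?thesis
    by (simp add: nn_integral_exp_dist nn_integral_cmult)
qed

text \<open>Of two independent exponential times with rates \<open>a\<close> and \<open>b\<close>, the first one is
  \<open>Exp(a + b)\<close>, it is the first with probability \<open>a / (a + b)\<close> independently of its value,
  and by memorylessness the other one exceeds it by a fresh exponential time.\<close>
lemma nn_integral_exp_race:
  fixes g :: "real \<Rightarrow> real \<Rightarrow> ennreal"
  assumes a: "0 < a" and b: "0 < b"
    and [measurable]: "case_prod g \<in> borel_measurable (borel \<Otimes>\<^sub>M borel)"
  shows "(\<integral>\<^sup>+x. \<integral>\<^sup>+y. g x y \<partial>exp_dist b \<partial>exp_dist a)
    = ennreal (a / (a + b)) * (\<integral>\<^sup>+u. \<integral>\<^sup>+v. g u (u + v) \<partial>exp_dist b \<partial>exp_dist (a + b))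
    + ennreal (b / (a + b)) * (\<integral>\<^sup>+u. \<integral>\<^sup>+v. g (u + v) u \<partial>exp_dist a \<partial>exp_dist (a + b))"
proof -
  interpret A: prob_space "exp_dist a"
    using a by (rule prob_space_exp_dist)
  interpret B: prob_space "exp_dist b"
    using b by (rule prob_space_exp_dist)
  interpret AB: pair_sigma_finite "exp_dist a" "exp_dist b"
    by unfold_locales
  have "(\<integral>\<^sup>+y. g x y \<partial>exp_dist b)
      = (\<integral>\<^sup>+y. (if x < y then g x y else 0) + (if y < x then g x y else 0) \<partial>exp_dist b)" for x
    by (rule nn_integral_cong_AE) (use AE_exp_dist_neq[where b = b and x = x] in \<open>auto elim!: eventually_mono\<close>)
  then have "(\<integral>\<^sup>+x. \<integral>\<^sup>+y. g x y \<partial>exp_dist b \<partial>exp_dist a)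
     = (\<integral>\<^sup>+x. \<integral>\<^sup>+y. (if x < y then g x y else 0) \<partial>exp_dist b \<partial>exp_dist a)
     + (\<integral>\<^sup>+x. \<integral>\<^sup>+y. (if y < x then g x y else 0) \<partial>exp_dist b \<partial>exp_dist a)"
    by (simp add: nn_integral_add)
  also have "(\<integral>\<^sup>+x. \<integral>\<^sup>+y. (if y < x then g x y else 0) \<partial>exp_dist b \<partial>exp_dist a)
     = (\<integral>\<^sup>+y. \<integral>\<^sup>+x. (if y < x then g x y else 0) \<partial>exp_dist a \<partial>exp_dist b)"
    by (rule AB.Fubini'[symmetric]) measurable
  also have "\<dots> = ennreal (b / (b + a)) * (\<integral>\<^sup>+u. \<integral>\<^sup>+v. g (u + v) u \<partial>exp_dist a \<partial>exp_dist (b + a))"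
    by (rule nn_integral_exp_race_first[OF b a]) measurable
  also note nn_integral_exp_race_first[OF a b]
  finally show ?thesis
    by (simp add: add.commute)
qed

lemma (in pair_sigma_finite) AE_pair_measure_marginals:
  assumes "AE x in M1. P x" "AE y in M2. Q y"
  shows "AE w in M1 \<Otimes>\<^sub>M M2. P (fst w) \<and> Q (snd w)"
proof -
  obtain N1 where N1: "{x \<in> space M1. \<not> P x} \<subseteq> N1" "emeasure M1 N1 = 0" "N1 \<in> sets M1"
    using assms(1) by (rule AE_E)
  obtain N2 where N2: "{y \<in> space M2. \<not> Q y} \<subseteq> N2" "emeasure M2 N2 = 0" "N2 \<in> sets M2"
    using assms(2) by (rule AE_E)
  have "N1 \<times> space M2 \<in> null_sets (M1 \<Otimes>\<^sub>M M2)"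
    using M2.emeasure_pair_measure_Times[OF N1(3) sets.top] N1(2)
    by (simp add: null_sets_def pair_measureI[OF N1(3) sets.top])
  moreover have "space M1 \<times> N2 \<in> null_sets (M1 \<Otimes>\<^sub>M M2)"
    using M2.emeasure_pair_measure_Times[OF sets.top N2(3)] N2(2)
    by (simp add: null_sets_def pair_measureI[OF sets.top N2(3)])
  ultimately have "N1 \<times> space M2 \<union> space M1 \<times> N2 \<in> null_sets (M1 \<Otimes>\<^sub>M M2)"
    by (rule null_sets.Un)
  then show ?thesis
    by (rule AE_I') (use N1(1) N2(1) in \<open>auto simp: space_pair_measure\<close>)
qed

section \<open>Arrival streams and the end of the attack cycle\<close>

definition arrival :: "real stream \<Rightarrow> nat \<Rightarrow> real" where
  "arrival s k = (\<Sum>i\<le>k. s !! i)"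

lemma counting_eq: "counting s t = card {k. arrival s k \<le> t}"
  unfolding counting_def arrival_def ..

lemma arrival_Cons_0 [simp]: "arrival (x ## s) 0 = x"
  by (simp add: arrival_def)

lemma arrival_Cons_Suc [simp]: "arrival (x ## s) (Suc k) = x + arrival s k"
  unfolding arrival_def sum.atMost_Suc_shift by simp

lemma arrival_0: "arrival s 0 = shd s" and arrival_Suc: "arrival s (Suc k) = shd s + arrival (stl s) k"
  by (metis arrival_Cons_0 stream.collapse, metis arrival_Cons_Suc stream.collapse)

lemma arrival_shift: "arrival ((shd s - x) ## stl s) k = arrival s k - x"
  by (cases k) (simp_all add: arrival_0 arrival_Suc)

lemma counting_shift: "counting s t = counting ((shd s - x) ## stl s) (t - x)"
  unfolding counting_eq arrival_shift by simp

definition nonneg_stream :: "real stream \<Rightarrow> bool" where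
  "nonneg_stream s \<longleftrightarrow> (\<forall>i. 0 \<le> s !! i)"

definition finite_arrivals :: "real stream \<Rightarrow> bool" where
  "finite_arrivals s \<longleftrightarrow> (\<forall>t. finite {k. arrival s k \<le> t})"

lemma nonneg_stream_Cons: "nonneg_stream (x ## s) \<longleftrightarrow> 0 \<le> x \<and> nonneg_stream s"
  unfolding nonneg_stream_def by (metis snth.simps(1,2) stream.sel(1,2) nat.exhaust)

lemma nonneg_stream_shd_stl: "nonneg_stream s \<Longrightarrow> 0 \<le> shd s \<and> nonneg_stream (stl s)"
  by (metis nonneg_stream_Cons stream.collapse)

lemma arrival_mono: "nonneg_stream s \<Longrightarrow> j \<le> k \<Longrightarrow> arrival s j \<le> arrival s k"
  unfolding arrival_def nonneg_stream_def by (intro sum_mono2) auto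

lemma shd_le_arrival: "nonneg_stream s \<Longrightarrow> shd s \<le> arrival s k"
  using arrival_mono[of s 0 k] by (simp add: arrival_0)

lemma finite_arrivals_stl: "finite_arrivals s \<Longrightarrow> finite_arrivals (stl s)"
  unfolding finite_arrivals_def
proof
  fix t
  assume "\<forall>t. finite {k. arrival s k \<le> t}"
  then have "finite (Suc -` {k. arrival s k \<le> t + shd s})"
    by (intro finite_vimageI) auto
  moreover have "{k. arrival (stl s) k \<le> t} = Suc -` {k. arrival s k \<le> t + shd s}"
    by (auto simp: arrival_Suc)
  ultimately show "finite {k. arrival (stl s) k \<le> t}"
    by simp
qed

lemma finite_arrivals_shift: "finite_arrivals s \<Longrightarrow> finite_arrivals ((shd s - x) ## stl s)"
  unfolding finite_arrivals_def arrival_shift by (simp add: diff_le_eq)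

lemma finite_arrivals_iff_unbounded:
  assumes "nonneg_stream s"
  shows "finite_arrivals s \<longleftrightarrow> (\<forall>t. \<exists>k. t < arrival s k)"
proof
  assume "finite_arrivals s"
  then show "\<forall>t. \<exists>k. t < arrival s k"
    unfolding finite_arrivals_def by (metis (mono_tags) infinite_UNIV_nat finite_subset not_le subsetI UNIV_I mem_Collect_eq)
next
  assume unbounded: "\<forall>t. \<exists>k. t < arrival s k"
  show "finite_arrivals s"
    unfolding finite_arrivals_def
  proof
    fix t
    obtain K where K: "t < arrival s K"
      using unbounded by auto
    have "{k. arrival s k \<le> t} \<subseteq> {..<K}"
    proof
      fix k
      assume "k \<in> {k. arrival s k \<le> t}"
      then show "k \<in> {..<K}"
        using K arrival_mono[OF assms, of K k] by (cases "K \<le> k") auto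
    qed
    then show "finite {k. arrival s k \<le> t}"
      by (rule finite_subset) simp
  qed
qed

lemma counting_eq_0: "nonneg_stream s \<Longrightarrow> t < shd s \<Longrightarrow> counting s t = 0"
  unfolding counting_eq using shd_le_arrival by (metis (mono_tags) Collect_empty_eq card.empty leD order_le_less_trans)

lemma counting_eq_Suc:
  assumes "finite_arrivals (stl s)" "shd s \<le> t"
  shows "counting s t = Suc (counting (stl s) (t - shd s))"
proof -
  have "{k. arrival s k \<le> t} = insert 0 (Suc ` {k. arrival (stl s) k \<le> t - shd s})"
    using assms(2) by (auto simp: arrival_0 arrival_Suc image_iff elim: nat.exhaust_sel)
      (metis not0_implies_Suc arrival_Suc add.commute le_diff_eq)
  moreover have "finite {k. arrival (stl s) k \<le> t - shd s}"
    using assms(1) by (simp add: finite_arrivals_def)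
  ultimately show ?thesis
    unfolding counting_eq by (simp add: card_image)
qed

text \<open>\<open>w = (h, a)\<close> holds the interarrival times of honest and attacker blocks;
  \<open>after_first_block\<close> moves the time origin to the first block.\<close>
definition first_block :: "real stream \<times> real stream \<Rightarrow> real" where
  "first_block w = min (shd (fst w)) (shd (snd w))"

definition honest_first :: "real stream \<times> real stream \<Rightarrow> bool" where
  "honest_first w \<longleftrightarrow> shd (fst w) < shd (snd w)"

definition after_first_block :: "real stream \<times> real stream \<Rightarrow> real stream \<times> real stream" where
  "after_first_block w = (if honest_first w
     then (stl (fst w), (shd (snd w) - shd (fst w)) ## stl (snd w))
     else ((shd (fst w) - shd (snd w)) ## stl (fst w), stl (snd w)))"

definition admissible :: "real stream \<times> real stream \<Rightarrow> bool" where
  "admissible w \<longleftrightarrow> nonneg_stream (fst w) \<and> nonneg_stream (snd w)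
     \<and> finite_arrivals (fst w) \<and> finite_arrivals (snd w)"

lemma first_block_nonneg: "admissible w \<Longrightarrow> 0 \<le> first_block w"
  by (simp add: admissible_def first_block_def nonneg_stream_shd_stl)

lemma admissible_after_first_block: "admissible w \<Longrightarrow> admissible (after_first_block w)"
  by (auto simp: admissible_def after_first_block_def honest_first_def nonneg_stream_Cons
      nonneg_stream_shd_stl finite_arrivals_stl finite_arrivals_shift)

lemma counting_before_first_block:
  "admissible w \<Longrightarrow> t < first_block w \<Longrightarrow> counting (fst w) t = 0 \<and> counting (snd w) t = 0"
  by (simp add: admissible_def first_block_def counting_eq_0)

lemma counting_after_first_block:
  assumes w: "admissible w" and t: "first_block w \<le> t"
  shows "counting (fst w) t = of_bool (honest_first w) + counting (fst (after_first_block w)) (t - first_block w)"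
    and "counting (snd w) t = of_bool (\<not> honest_first w) + counting (snd (after_first_block w)) (t - first_block w)"
proof -
  obtain h a where ha: "w = (h, a)"
    by (cases w)
  have "finite_arrivals (stl h)" "finite_arrivals (stl a)"
    using w by (simp_all add: admissible_def ha finite_arrivals_stl)
  then have "counting h t = of_bool (honest_first w) + counting (fst (after_first_block w)) (t - first_block w)
    \<and> counting a t = of_bool (\<not> honest_first w) + counting (snd (after_first_block w)) (t - first_block w)"
    using t counting_eq_Suc counting_shift[of a t "shd h"] counting_shift[of h t "shd a"]
    by (auto simp: ha first_block_def honest_first_def after_first_block_def)
  then show "counting (fst w) t = of_bool (honest_first w) + counting (fst (after_first_block w)) (t - first_block w)"
    and "counting (snd w) t = of_bool (\<not> honest_first w) + counting (snd (after_first_block w)) (t - first_block w)"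
    by (simp_all add: ha)
qed

fun block_time :: "nat \<Rightarrow> real stream \<times> real stream \<Rightarrow> ennreal" where
  "block_time 0 w = 0"
| "block_time (Suc k) w = ennreal (first_block w) + block_time k (after_first_block w)"

lemma block_time_mono: "block_time k w \<le> block_time (Suc k) w"
  by (induction k arbitrary: w) (simp_all add: add_left_mono)

lemma block_time_le_counting:
  "admissible w \<Longrightarrow> 0 \<le> t \<Longrightarrow> block_time k w \<le> ennreal t
    \<Longrightarrow> k \<le> counting (fst w) t + counting (snd w) t"
proof (induction k arbitrary: w t)
  case 0
  then show ?case by simp
next
  case (Suc k)
  obtain x where x: "block_time k (after_first_block w) = ennreal x" "0 \<le> x"
    using Suc.prems(3) by (cases "block_time k (after_first_block w)") (auto simp: top_unique)
  have "first_block w + x \<le> t"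
    using Suc.prems first_block_nonneg x by (simp add: ennreal_plus[symmetric] del: ennreal_plus)
  then have "k \<le> counting (fst (after_first_block w)) (t - first_block w)
      + counting (snd (after_first_block w)) (t - first_block w)"
    using x by (intro Suc.IH admissible_after_first_block Suc.prems) auto
  then show ?case
    using counting_after_first_block[OF Suc.prems(1)] \<open>first_block w + x \<le> t\<close> x(2)
    by (cases "honest_first w") auto
qed

lemma SUP_block_time:
  assumes w: "admissible w"
  shows "(SUP k. block_time k w) = \<top>"
proof (rule ennreal_SUP_eq_top)
  fix N :: nat
  let ?k = "Suc (counting (fst w) (real N) + counting (snd w) (real N))"
  have "\<not> block_time ?k w \<le> ennreal (real N)"
    using block_time_le_counting[OF w, of "real N" ?k] by auto
  then have "of_nat N \<le> block_time ?k w"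
    by (simp add: ennreal_of_nat_eq_real_of_nat del: block_time.simps)
  then show "\<exists>k\<in>UNIV. of_nat N \<le> block_time k w"
    by blast
qed

definition stop_times :: "nat \<Rightarrow> nat \<Rightarrow> nat \<Rightarrow> nat \<Rightarrow> real stream \<times> real stream \<Rightarrow> real set" where
  "stop_times A z n m w = {t. 0 \<le> t \<and> stopped A z (n + counting (fst w) t) (m + counting (snd w) t)}"

definition stop_time :: "nat \<Rightarrow> nat \<Rightarrow> nat \<Rightarrow> nat \<Rightarrow> real stream \<times> real stream \<Rightarrow> ennreal" where
  "stop_time A z n m w = (if stop_times A z n m w = {} then \<infinity> else ennreal (Inf (stop_times A z n m w)))"

lemma T'_eq_Inf_stop_times: "T' A z w = Inf (stop_times A z 0 1 w)"
  unfolding T'_def stop_times_def attack_over_def stopped_def by (simp add: Let_def)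

lemma Inf_stop_times_nonneg: "stop_times A z n m w \<noteq> {} \<Longrightarrow> 0 \<le> Inf (stop_times A z n m w)"
  by (intro cInf_greatest) (auto simp: stop_times_def)

lemma T'_eq_stop_time:
  "T' A z w = (if stop_time A z 0 1 w = \<infinity> then Inf {} else enn2real (stop_time A z 0 1 w))"
  using Inf_stop_times_nonneg[of A z 0 1 w] by (auto simp: T'_eq_Inf_stop_times stop_time_def)

lemma stop_time_stopped:
  assumes "stopped A z n m" "admissible w" "0 < first_block w"
  shows "stop_time A z n m w = 0"
proof -
  have "0 \<in> stop_times A z n m w"
    using assms counting_before_first_block[of w 0] by (simp add: stop_times_def)
  moreover have "Inf (stop_times A z n m w) = 0"
    by (rule cInf_eq_minimum[OF calculation]) (simp add: stop_times_def)
  ultimately show ?thesis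
    by (auto simp: stop_time_def)
qed

lemma stop_times_step:
  assumes w: "admissible w" and not_stopped: "\<not> stopped A z n m"
  shows "stop_times A z n m w = (\<lambda>s. first_block w + s) `
    stop_times A z (n + of_bool (honest_first w)) (m + of_bool (\<not> honest_first w)) (after_first_block w)"
    (is "_ = (\<lambda>s. ?x + s) ` ?S")
proof (intro set_eqI iffI)
  fix t
  assume t: "t \<in> stop_times A z n m w"
  then have "?x \<le> t"
    using counting_before_first_block[OF w, of t] not_stopped by (force simp: stop_times_def)
  then have "t - ?x \<in> ?S"
    using t counting_after_first_block[OF w] by (simp add: stop_times_def add.assoc)
  then show "t \<in> (\<lambda>s. ?x + s) ` ?S"
    by (auto intro: image_eqI[of _ _ "t - ?x"])
next
  fix t
  assume "t \<in> (\<lambda>s. ?x + s) ` ?S"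
  then obtain s where s: "s \<in> ?S" "t = ?x + s"
    by auto
  then have "?x \<le> t"
    by (simp add: stop_times_def)
  then show "t \<in> stop_times A z n m w"
    using s first_block_nonneg[OF w] counting_after_first_block[OF w] by (simp add: stop_times_def add.assoc)
qed

lemma stop_time_step:
  assumes w: "admissible w" and not_stopped: "\<not> stopped A z n m"
  shows "stop_time A z n m w = ennreal (first_block w)
    + stop_time A z (n + of_bool (honest_first w)) (m + of_bool (\<not> honest_first w)) (after_first_block w)"
proof (cases "stop_times A z (n + of_bool (honest_first w)) (m + of_bool (\<not> honest_first w)) (after_first_block w) = {}")
  case True
  then show ?thesis
    by (simp add: stop_time_def stop_times_step[OF assms])
next
  case False
  let ?S = "stop_times A z (n + of_bool (honest_first w)) (m + of_bool (\<not> honest_first w)) (after_first_block w)"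
  have "bdd_below ?S"
    by (rule bdd_belowI[of _ 0]) (simp add: stop_times_def)
  then have "Inf ((\<lambda>s. first_block w + s) ` ?S) = first_block w + Inf ?S"
    using Inf_add_eq[of "\<lambda>s. s" ?S "first_block w"] False by (simp add: image_image)
  then show ?thesis
    using False first_block_nonneg[OF w] Inf_stop_times_nonneg[OF False]
    by (simp add: stop_time_def stop_times_step[OF assms] ennreal_plus)
qed

lemma min_add_same_left:
  fixes x a b :: "'a :: {linorder, ordered_ab_semigroup_add}"
  shows "min (x + a) (x + b) = x + min a b"
  by (cases "a \<le> b") (simp_all add: min_def add_left_mono antisym)

lemma min_stop_time_block_time_Suc:
  assumes "admissible w" "0 < first_block w"
  shows "min (stop_time A z n m w) (block_time (Suc k) w) = (if stopped A z n m then 0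
    else ennreal (first_block w) + min (stop_time A z (n + of_bool (honest_first w))
      (m + of_bool (\<not> honest_first w)) (after_first_block w)) (block_time k (after_first_block w)))"
  using assms stop_time_stopped[of A z n m w] stop_time_step[of w A z n m]
  by (simp add: min_add_same_left del: of_bool_eq)

section \<open>Measurability of the end of the cycle\<close>

lemma measurable_card_Collect:
  assumes [measurable]: "\<And>k. Measurable.pred M (P k)"
  shows "(\<lambda>x. card {k::nat. P k x}) \<in> measurable M (count_space UNIV)"
proof (subst measurable_count_space_eq2_countable, safe)
  fix n :: nat
  define \<F> where "\<F> = {F :: nat set. finite F \<and> card F = n}"
  have "countable \<F>"
    unfolding \<F>_def by (rule countable_subset[OF _ countable_Collect_finite]) auto
  have "card {k. P k x} = n \<longleftrightarrow> (n = 0 \<and> (\<forall>N. \<exists>k\<ge>N. P k x)) \<or> (\<exists>F\<in>\<F>. \<forall>k. P k x = (k \<in> F))" for x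
    using infinite_nat_iff_unbounded_le[of "{k. P k x}"]
    by (cases "finite {k. P k x}") (auto simp: \<F>_def intro!: bexI[of _ "{k. P k x}"])
  then have "(\<lambda>x. card {k. P k x}) -` {n} \<inter> space M
      = {x\<in>space M. (n = 0 \<and> (\<forall>N. \<exists>k\<ge>N. P k x)) \<or> (\<exists>F\<in>\<F>. \<forall>k. P k x = (k \<in> F))}"
    by auto
  also have "\<dots> \<in> sets M"
    using \<open>countable \<F>\<close> by measurable
  finally show "(\<lambda>x. card {k. P k x}) -` {n} \<inter> space M \<in> sets M" .
qed simp

lemma measurable_counting [measurable (raw)]:
  assumes [measurable]: "\<And>k. (\<lambda>x. arrival (s x) k) \<in> borel_measurable M" "c \<in> borel_measurable M"
  shows "(\<lambda>x. counting (s x) (c x)) \<in> measurable M (count_space UNIV)"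
  unfolding counting_eq by (rule measurable_card_Collect) measurable

lemma pred_count_space_pair:
  fixes P :: "nat \<Rightarrow> nat \<Rightarrow> bool"
  assumes f: "f \<in> measurable M (count_space UNIV)" and g: "g \<in> measurable M (count_space UNIV)"
  shows "Measurable.pred M (\<lambda>x. P (f x) (g x))"
proof -
  have "Measurable.pred M (\<lambda>x. P i (g x))" for i
    by (rule measurable_compose_countable[where f = "\<lambda>j x. P i j", OF _ g]) simp
  then show ?thesis
    by (rule measurable_compose_countable[where f = "\<lambda>i x. P i (g x)", OF _ f])
qed

lemma INF_arrival_above_eq:
  assumes fin: "finite {k. arrival s k \<le> t}"
    and close: "\<And>d. d > 0 \<Longrightarrow> \<exists>k. t < arrival s k \<and> arrival s k < t + d"
  shows "(INF k\<in>-{k. arrival s k \<le> t}. arrival s k) = t"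
proof (rule antisym)
  let ?N = "{k. arrival s k \<le> t}"
  have "- ?N \<noteq> {}"
    using fin by (metis Compl_eq_Diff_UNIV Diff_infinite_finite finite.emptyI infinite_UNIV_nat)
  then show "t \<le> (INF k\<in>- ?N. arrival s k)"
    by (intro cINF_greatest) auto
  show "(INF k\<in>- ?N. arrival s k) \<le> t"
  proof (rule ccontr)
    assume "\<not> (INF k\<in>- ?N. arrival s k) \<le> t"
    then obtain k where k: "t < arrival s k" "arrival s k < (INF k\<in>- ?N. arrival s k)"
      using close[of "(INF k\<in>- ?N. arrival s k) - t"] by auto
    have "bdd_below (arrival s ` (- ?N))"
      by (rule bdd_belowI[of _ t]) auto
    then have "(INF k\<in>- ?N. arrival s k) \<le> arrival s k"
      using k(1) by (intro cINF_lower) auto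
    with k(2) show False
      by simp
  qed
qed

text \<open>This is why the infimum of \<open>stop_times\<close> is approached from above within the
  countable family \<open>stop_candidates\<close> below.\<close>
lemma counting_right_constant_or_limit:
  "(\<exists>d>0. \<forall>t'. t < t' \<and> t' < t + d \<longrightarrow> counting s t' = counting s t) \<or>
   (finite {k. arrival s k \<le> t} \<and> (INF k\<in>-{k. arrival s k \<le> t}. arrival s k) = t)"
proof (cases "finite {k. arrival s k \<le> t}")
  case False
  have "counting s t' = counting s t" if "t < t'" for t'
  proof -
    have "{k. arrival s k \<le> t} \<subseteq> {k. arrival s k \<le> t'}"
      using that by auto
    then have "infinite {k. arrival s k \<le> t'}"
      using False finite_subset by blast
    then show ?thesis
      using False unfolding counting_eq by simp
  qed
  then show ?thesis
    by (auto intro!: exI[of _ 1])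
next
  case fin: True
  show ?thesis
  proof (cases "\<exists>d>0. \<forall>k. \<not> (t < arrival s k \<and> arrival s k < t + d)")
    case True
    then obtain d where d: "d > 0" "\<forall>k. \<not> (t < arrival s k \<and> arrival s k < t + d)"
      by auto
    have "{k. arrival s k \<le> t'} = {k. arrival s k \<le> t}" if "t < t'" "t' < t + d" for t'
      using d(2) that by (force simp: not_less)
    then show ?thesis
      using d(1) unfolding counting_eq by auto
  next
    case False
    then show ?thesis
      using fin INF_arrival_above_eq[OF fin] by auto
  qed
qed

definition stop_candidates :: "(rat + (nat set + nat set)) set" where
  "stop_candidates = range Inl \<union> Inr ` (Inl ` {F. finite F} \<union> Inr ` {F. finite F})"

lemma countable_stop_candidates: "countable stop_candidates"
  unfolding stop_candidates_def by (intro countable_Un countable_image countable_Collect_finite) auto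

definition candidate :: "rat + (nat set + nat set) \<Rightarrow> real stream \<times> real stream \<Rightarrow> real" where
  "candidate i w = (case i of Inl r \<Rightarrow> real_of_rat r
     | Inr (Inl F) \<Rightarrow> (INF k\<in>-F. arrival (fst w) k) | Inr (Inr F) \<Rightarrow> (INF k\<in>-F. arrival (snd w) k))"

lemma stop_times_candidate_dense:
  assumes t: "t \<in> stop_times A z n m w" and r: "t < r"
  shows "\<exists>i\<in>stop_candidates. candidate i w \<in> stop_times A z n m w \<and> candidate i w < r"
proof -
  obtain h a where w: "w = (h, a)"
    by (cases w)
  have from_h: ?thesis if "finite {k. arrival h k \<le> t}" "(INF k\<in>-{k. arrival h k \<le> t}. arrival h k) = t"
    using that t r
    by (intro bexI[of _ "Inr (Inl {k. arrival h k \<le> t})"]) (auto simp: candidate_def stop_candidates_def w)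
  have from_a: ?thesis if "finite {k. arrival a k \<le> t}" "(INF k\<in>-{k. arrival a k \<le> t}. arrival a k) = t"
    using that t r
    by (intro bexI[of _ "Inr (Inr {k. arrival a k \<le> t})"]) (auto simp: candidate_def stop_candidates_def w)
  have from_rat: ?thesis
    if dh: "dh > 0" "\<forall>t'. t < t' \<and> t' < t + dh \<longrightarrow> counting h t' = counting h t"
      and da: "da > 0" "\<forall>t'. t < t' \<and> t' < t + da \<longrightarrow> counting a t' = counting a t" for dh da
  proof -
    have "t < min (min (t + dh) (t + da)) r"
      using dh da r by simp
    then obtain x where x: "x \<in> \<rat>" "t < x" "x < min (min (t + dh) (t + da)) r"
      using Rats_dense_in_real by blast
    then obtain q where q: "x = real_of_rat q"
      by (auto simp: Rats_def)
    have "x \<in> stop_times A z n m w"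
      using t x dh da by (auto simp: stop_times_def w)
    then show ?thesis
      using x q by (intro bexI[of _ "Inl q"]) (auto simp: candidate_def stop_candidates_def)
  qed
  show ?thesis
    using counting_right_constant_or_limit[of t h] counting_right_constant_or_limit[of t a] from_h from_a from_rat
    by blast
qed

lemma stop_time_eq_INF_candidates:
  "stop_time A z n m w
    = (INF i\<in>stop_candidates. if candidate i w \<in> stop_times A z n m w then ennreal (candidate i w) else \<infinity>)"
    (is "_ = ?I")
proof (cases "stop_times A z n m w = {}")
  case True
  then show ?thesis by (simp add: stop_time_def)
next
  case False
  let ?S = "stop_times A z n m w"
  have bdd: "bdd_below ?S"
    by (rule bdd_belowI[of _ 0]) (simp add: stop_times_def)
  have "ennreal (Inf ?S) \<le> ?I"
    using bdd by (intro INF_greatest) (auto intro: ennreal_leI cInf_lower)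
  moreover have "?I \<le> ennreal (Inf ?S)"
  proof (rule ennreal_le_epsilon)
    fix e :: real
    assume e: "0 < e"
    then obtain t where "t \<in> ?S" "t < Inf ?S + e"
      using cInf_lessD[OF False, of "Inf ?S + e"] by auto
    then obtain i where i: "i \<in> stop_candidates" "candidate i w \<in> ?S" "candidate i w < Inf ?S + e"
      using stop_times_candidate_dense by blast
    then have "?I \<le> ennreal (candidate i w)"
      by (intro INF_lower2[OF i(1)]) simp
    also have "\<dots> \<le> ennreal (Inf ?S + e)"
      using i by (intro ennreal_leI) simp
    also have "\<dots> = ennreal (Inf ?S) + ennreal e"
      using e Inf_stop_times_nonneg[OF False] by (simp add: ennreal_plus)
    finally show "?I \<le> ennreal (Inf ?S) + ennreal e" .
  qed
  ultimately show ?thesis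
    using False by (simp add: stop_time_def)
qed

context
  fixes M :: "(real stream \<times> real stream) measure" and l1 l2 :: real
  defines "M \<equiv> stream_space (exp_dist l1) \<Otimes>\<^sub>M stream_space (exp_dist l2)"
begin

lemma measurable_arrival [measurable]:
  "(\<lambda>w. arrival (fst w) k) \<in> borel_measurable M" "(\<lambda>w. arrival (snd w) k) \<in> borel_measurable M"
  unfolding M_def arrival_def by measurable

lemma measurable_candidate [measurable]: "candidate i \<in> borel_measurable M"
proof -
  have INF_arrival: "(\<lambda>w. INF k\<in>-F. arrival (fst w) k) \<in> borel_measurable M"
    "(\<lambda>w. INF k\<in>-F. arrival (snd w) k) \<in> borel_measurable M" for F
    by (rule borel_measurable_cINF_real; simp)+
  show ?thesis
  proof (cases i)
    case (Inr j)
    with INF_arrival show ?thesis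
      by (cases j) (simp_all add: candidate_def[abs_def])
  qed (simp add: candidate_def[abs_def])
qed

lemma measurable_stop_time [measurable]: "stop_time A z n m \<in> borel_measurable M"
proof -
  have "Measurable.pred M (\<lambda>w. stopped A z (n + counting (fst w) (candidate i w)) (m + counting (snd w) (candidate i w)))" for i
    by (intro pred_count_space_pair[where P = "\<lambda>i j. stopped A z (n + i) (m + j)"] measurable_counting) measurable
  then have [measurable]: "Measurable.pred M (\<lambda>w. candidate i w \<in> stop_times A z n m w)" for i
    unfolding stop_times_def mem_Collect_eq by measurable
  show ?thesis
    unfolding stop_time_eq_INF_candidates by (rule borel_measurable_INF[OF countable_stop_candidates]) measurable
qed

lemma measurable_T' [measurable]: "T' A z \<in> borel_measurable M"
  unfolding T'_eq_stop_time[abs_def] by measurable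

end

section \<open>The mining process\<close>

lemma AE_stream_space_exp_dist_pos: "0 < l \<Longrightarrow> AE s in stream_space (exp_dist l). \<forall>i. 0 < s !! i"
  using prob_space.AE_stream_all[OF prob_space_exp_dist, of l "\<lambda>x. 0 < x"] AE_exp_dist_pos[of l]
  by (simp add: stream_all_def sset_range)

lemma nn_integral_exp_neg_arrival:
  assumes l: "0 < l"
  shows "(\<integral>\<^sup>+s. ennreal (exp (- arrival s k)) \<partial>stream_space (exp_dist l)) = ennreal (l / (l + 1)) ^ Suc k"
proof -
  interpret E: prob_space "exp_dist l"
    using l by (rule prob_space_exp_dist)
  interpret S: prob_space "stream_space (exp_dist l)"
    by (rule E.prob_space_stream_space)
  have [measurable]: "(\<lambda>s. arrival s k) \<in> borel_measurable (stream_space (exp_dist l))" for k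
    unfolding arrival_def by measurable
  show ?thesis
  proof (induction k)
    case 0
    show ?case
      by (subst E.nn_integral_stream_space)
        (simp_all add: S.emeasure_space_1[simplified] nn_integral_exp_dist_exp[OF l])
  next
    case (Suc k)
    have "(\<integral>\<^sup>+s. ennreal (exp (- arrival (x ## s) (Suc k))) \<partial>stream_space (exp_dist l))
        = ennreal (exp (- x)) * (\<integral>\<^sup>+s. ennreal (exp (- arrival s k)) \<partial>stream_space (exp_dist l))" for x
      by (simp add: ennreal_mult[symmetric] exp_add[symmetric] nn_integral_cmult[symmetric] exp_diff)
    then show ?case
      by (subst E.nn_integral_stream_space)
        (simp_all add: nn_integral_multc Suc nn_integral_exp_dist_exp[OF l])
  qed
qed

lemma AE_eq_0_of_nn_integral_le_power:
  fixes Y :: "'a \<Rightarrow> ennreal" and c :: real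
  assumes [measurable]: "Y \<in> borel_measurable M" and c: "0 \<le> c" "c < 1"
    and le: "\<And>k. (\<integral>\<^sup>+x. Y x \<partial>M) \<le> ennreal c ^ Suc k"
  shows "AE x in M. Y x = 0"
proof -
  have "(\<lambda>k. c ^ Suc k) \<longlonglongrightarrow> 0"
    using c by (intro LIMSEQ_Suc[OF LIMSEQ_power_zero]) auto
  then have "(\<lambda>k. ennreal (c ^ Suc k)) \<longlonglongrightarrow> ennreal 0"
    by (rule tendsto_ennrealI)
  then have "(\<lambda>k. ennreal c ^ Suc k) \<longlonglongrightarrow> 0"
    using c by (simp add: ennreal_power ennreal_mult)
  then have "(\<integral>\<^sup>+x. Y x \<partial>M) \<le> 0"
    by (rule LIMSEQ_le_const) (use le in auto)
  then show ?thesis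
    by (simp add: nn_integral_0_iff_AE)
qed

text \<open>Since \<open>E[exp (- arrival s k)] = (l / (l + 1)) ^ (k + 1)\<close>, the infimum over \<open>k\<close> of
  \<open>exp (- arrival s k)\<close> vanishes almost surely.\<close>
lemma AE_stream_space_exp_dist_unbounded:
  assumes l: "0 < l"
  shows "AE s in stream_space (exp_dist l). \<forall>t. \<exists>k. t < arrival s k"
proof -
  define Y where "Y s = (INF k. ennreal (exp (- arrival s k)))" for s
  have "AE s in stream_space (exp_dist l). Y s = 0"
  proof (rule AE_eq_0_of_nn_integral_le_power[of _ _ "l / (l + 1)"])
    show "Y \<in> borel_measurable (stream_space (exp_dist l))"
      unfolding Y_def arrival_def by measurable
    fix k
    have "(\<integral>\<^sup>+s. Y s \<partial>stream_space (exp_dist l)) \<le> (\<integral>\<^sup>+s. ennreal (exp (- arrival s k)) \<partial>stream_space (exp_dist l))"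
      unfolding Y_def by (intro nn_integral_mono INF_lower) auto
    then show "(\<integral>\<^sup>+s. Y s \<partial>stream_space (exp_dist l)) \<le> ennreal (l / (l + 1)) ^ Suc k"
      using nn_integral_exp_neg_arrival[OF l, of k] by simp
  qed (use l in auto)
  then show ?thesis
  proof (rule AE_mp, intro AE_I2 impI allI)
    fix s t
    assume "Y s = 0"
    then have "(INF k. ennreal (exp (- arrival s k))) < ennreal (exp (- t))"
      by (simp add: Y_def)
    then obtain k where "ennreal (exp (- arrival s k)) < ennreal (exp (- t))"
      by (auto simp: INF_less_iff)
    then show "\<exists>k. t < arrival s k"
      by (auto simp: ennreal_less_iff)
  qed
qed

definition regular_stream :: "real stream \<Rightarrow> bool" where
  "regular_stream s \<longleftrightarrow> (\<forall>i. 0 < s !! i) \<and> finite_arrivals s"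

lemma AE_regular_stream:
  assumes l: "0 < l"
  shows "AE s in stream_space (exp_dist l). regular_stream s"
  using AE_stream_space_exp_dist_pos[OF l] AE_stream_space_exp_dist_unbounded[OF l]
proof eventually_elim
  case (elim s)
  then have "nonneg_stream s"
    by (auto simp: nonneg_stream_def less_imp_le)
  with elim show ?case
    by (simp add: regular_stream_def finite_arrivals_iff_unbounded)
qed

lemma regular_stream_shd_pos: "regular_stream s \<Longrightarrow> 0 < shd s"
  by (metis regular_stream_def snth.simps(1))

lemma regular_stream_pair:
  assumes "regular_stream (fst w)" "regular_stream (snd w)"
  shows "admissible w" "0 < first_block w"
  using assms regular_stream_shd_pos[OF assms(1)] regular_stream_shd_pos[OF assms(2)]
  by (auto simp: regular_stream_def admissible_def nonneg_stream_def less_imp_le first_block_def)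

locale mining =
  fixes q tau0 :: real
  assumes q_pos: "0 < q" and q_less_1: "q < 1" and tau0_pos: "0 < tau0"
begin

definition honest_rate :: real where
  "honest_rate = (1 - q) / tau0"

definition attacker_rate :: real where
  "attacker_rate = q / tau0"

lemma honest_rate_pos: "0 < honest_rate" and attacker_rate_pos: "0 < attacker_rate"
  using q_pos q_less_1 tau0_pos by (simp_all add: honest_rate_def attacker_rate_def)

lemma honest_plus_attacker_rate: "honest_rate + attacker_rate = 1 / tau0"
  unfolding honest_rate_def attacker_rate_def by (simp add: add_divide_distrib[symmetric])

abbreviation "Eh \<equiv> exp_dist honest_rate"
abbreviation "Ea \<equiv> exp_dist attacker_rate"
abbreviation "E \<equiv> exp_dist (1 / tau0)"
abbreviation "Sh \<equiv> stream_space Eh"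
abbreviation "Sa \<equiv> stream_space Ea"
abbreviation "\<Omega> \<equiv> Sh \<Otimes>\<^sub>M Sa"

lemma mining_space_eq: "mining_space q tau0 = \<Omega>"
  unfolding mining_space_def honest_rate_def attacker_rate_def ..

sublocale Eh: prob_space Eh
  by (rule prob_space_exp_dist[OF honest_rate_pos])
sublocale Ea: prob_space Ea
  by (rule prob_space_exp_dist[OF attacker_rate_pos])
sublocale E: prob_space E
  using tau0_pos by (intro prob_space_exp_dist) simp
sublocale Sh: prob_space Sh
  by (rule Eh.prob_space_stream_space)
sublocale Sa: prob_space Sa
  by (rule Ea.prob_space_stream_space)
sublocale \<Omega>: pair_prob_space Sh Sa
  by unfold_locales
sublocale Sh_Ea: pair_sigma_finite Sh Ea
  by unfold_locales

lemma AE_regular_streams: "AE w in \<Omega>. regular_stream (fst w) \<and> regular_stream (snd w)"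
  by (intro \<Omega>.AE_pair_measure_marginals AE_regular_stream honest_rate_pos attacker_rate_pos)

definition push_honest :: "real \<Rightarrow> real stream \<times> real stream \<Rightarrow> real stream \<times> real stream" where
  "push_honest u w = (u ## fst w, (u + shd (snd w)) ## stl (snd w))"

definition push_attacker :: "real \<Rightarrow> real stream \<times> real stream \<Rightarrow> real stream \<times> real stream" where
  "push_attacker u w = ((u + shd (fst w)) ## stl (fst w), u ## snd w)"

lemma first_block_push_honest:
  assumes "0 \<le> u" "0 < shd (snd w)"
  shows "honest_first (push_honest u w)" "first_block (push_honest u w) = u"
    "after_first_block (push_honest u w) = w"
  using assms by (auto simp: push_honest_def first_block_def honest_first_def after_first_block_def)

lemma first_block_push_attacker:
  assumes "0 \<le> u" "0 < shd (fst w)"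
  shows "\<not> honest_first (push_attacker u w)" "first_block (push_attacker u w) = u"
    "after_first_block (push_attacker u w) = w"
  using assms by (auto simp: push_attacker_def first_block_def honest_first_def after_first_block_def)

definition heads_integral :: "(real stream \<times> real stream \<Rightarrow> ennreal) \<Rightarrow> real \<Rightarrow> real \<Rightarrow> ennreal" where
  "heads_integral F x y = (\<integral>\<^sup>+h. \<integral>\<^sup>+a. F (x ## h, y ## a) \<partial>Sa \<partial>Sh)"

lemma measurable_heads_integral:
  assumes [measurable]: "F \<in> borel_measurable \<Omega>"
  shows "case_prod (heads_integral F) \<in> borel_measurable (borel \<Otimes>\<^sub>M borel)"
  unfolding heads_integral_def by measurable

lemma nn_integral_heads_integral:
  assumes [measurable]: "F \<in> borel_measurable \<Omega>"
  shows "(\<integral>\<^sup>+w. F w \<partial>\<Omega>) = (\<integral>\<^sup>+x. \<integral>\<^sup>+y. heads_integral F x y \<partial>Ea \<partial>Eh)"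
proof -
  have "(\<integral>\<^sup>+w. F w \<partial>\<Omega>) = (\<integral>\<^sup>+h. \<integral>\<^sup>+a. F (h, a) \<partial>Sa \<partial>Sh)"
    by (rule Sa.nn_integral_fst[symmetric]) measurable
  also have "\<dots> = (\<integral>\<^sup>+x. \<integral>\<^sup>+h. \<integral>\<^sup>+a. F (x ## h, a) \<partial>Sa \<partial>Sh \<partial>Eh)"
    by (rule Eh.nn_integral_stream_space) measurable
  also have "\<dots> = (\<integral>\<^sup>+x. \<integral>\<^sup>+h. \<integral>\<^sup>+y. \<integral>\<^sup>+a. F (x ## h, y ## a) \<partial>Sa \<partial>Ea \<partial>Sh \<partial>Eh)"
    by (intro nn_integral_cong Ea.nn_integral_stream_space) measurable
  also have "\<dots> = (\<integral>\<^sup>+x. \<integral>\<^sup>+y. heads_integral F x y \<partial>Ea \<partial>Eh)"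
    unfolding heads_integral_def by (intro nn_integral_cong Sh_Ea.Fubini'[symmetric]) measurable
  finally show ?thesis .
qed

lemma nn_integral_heads_integral_honest:
  assumes [measurable]: "F \<in> borel_measurable \<Omega>"
  shows "(\<integral>\<^sup>+v. heads_integral F u (u + v) \<partial>Ea) = (\<integral>\<^sup>+w. F (push_honest u w) \<partial>\<Omega>)"
proof -
  have "(\<integral>\<^sup>+a. F (u ## h, (u + shd a) ## stl a) \<partial>Sa)
      = (\<integral>\<^sup>+v. \<integral>\<^sup>+a. F (u ## h, (u + shd (v ## a)) ## stl (v ## a)) \<partial>Sa \<partial>Ea)" for h
    by (rule Ea.nn_integral_stream_space) measurable
  then have "(\<integral>\<^sup>+h. \<integral>\<^sup>+v. \<integral>\<^sup>+a. F (u ## h, (u + v) ## a) \<partial>Sa \<partial>Ea \<partial>Sh)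
      = (\<integral>\<^sup>+h. \<integral>\<^sup>+a. F (u ## h, (u + shd a) ## stl a) \<partial>Sa \<partial>Sh)"
    by simp
  moreover have "(\<integral>\<^sup>+v. heads_integral F u (u + v) \<partial>Ea)
      = (\<integral>\<^sup>+h. \<integral>\<^sup>+v. \<integral>\<^sup>+a. F (u ## h, (u + v) ## a) \<partial>Sa \<partial>Ea \<partial>Sh)"
    unfolding heads_integral_def by (rule Sh_Ea.Fubini') measurable
  ultimately show ?thesis
    using Sa.nn_integral_fst[of "\<lambda>w. F (push_honest u w)" Sh] by (simp add: push_honest_def)
qed

lemma nn_integral_heads_integral_attacker:
  assumes [measurable]: "F \<in> borel_measurable \<Omega>"
  shows "(\<integral>\<^sup>+v. heads_integral F (u + v) u \<partial>Eh) = (\<integral>\<^sup>+w. F (push_attacker u w) \<partial>\<Omega>)"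
proof -
  have "(\<integral>\<^sup>+h. \<integral>\<^sup>+a. F ((u + shd h) ## stl h, u ## a) \<partial>Sa \<partial>Sh)
     = (\<integral>\<^sup>+v. \<integral>\<^sup>+h. \<integral>\<^sup>+a. F ((u + shd (v ## h)) ## stl (v ## h), u ## a) \<partial>Sa \<partial>Sh \<partial>Eh)"
    by (rule Eh.nn_integral_stream_space) measurable
  then show ?thesis
    using Sa.nn_integral_fst[of "\<lambda>w. F (push_attacker u w)" Sh]
    by (simp add: heads_integral_def push_attacker_def)
qed

lemma nn_integral_split_first_block:
  assumes [measurable]: "F \<in> borel_measurable \<Omega>"
  shows "(\<integral>\<^sup>+w. F w \<partial>\<Omega>) = ennreal (1 - q) * (\<integral>\<^sup>+u. \<integral>\<^sup>+w. F (push_honest u w) \<partial>\<Omega> \<partial>E)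
     + ennreal q * (\<integral>\<^sup>+u. \<integral>\<^sup>+w. F (push_attacker u w) \<partial>\<Omega> \<partial>E)"
proof -
  have fractions: "honest_rate / (honest_rate + attacker_rate) = 1 - q"
    "attacker_rate / (honest_rate + attacker_rate) = q"
    unfolding honest_plus_attacker_rate using tau0_pos by (simp_all add: honest_rate_def attacker_rate_def)
  show ?thesis
    using nn_integral_exp_race[OF honest_rate_pos attacker_rate_pos measurable_heads_integral[OF assms]]
    unfolding fractions unfolding honest_plus_attacker_rate
    by (simp add: nn_integral_heads_integral nn_integral_heads_integral_honest nn_integral_heads_integral_attacker)
qed

lemma measurable_first_block [measurable]: "first_block \<in> borel_measurable \<Omega>"
  unfolding first_block_def by measurable

lemma measurable_honest_first [measurable]: "Measurable.pred \<Omega> honest_first"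
  unfolding honest_first_def by measurable

lemma measurable_after_first_block [measurable]: "after_first_block \<in> measurable \<Omega> \<Omega>"
  unfolding after_first_block_def honest_first_def by measurable

lemma measurable_block_time [measurable]: "block_time k \<in> borel_measurable \<Omega>"
  by (induction k) (simp_all add: measurable_compose[OF measurable_after_first_block])

text \<open>The Markov property at the first block: whatever its time and type, the
  configuration after it is again distributed according to \<open>\<Omega>\<close>.\<close>
lemma nn_integral_first_block:
  fixes H :: "bool \<Rightarrow> real \<Rightarrow> real stream \<times> real stream \<Rightarrow> ennreal"
  assumes [measurable]: "\<And>b. case_prod (H b) \<in> borel_measurable (borel \<Otimes>\<^sub>M \<Omega>)"
  shows "(\<integral>\<^sup>+w. H (honest_first w) (first_block w) (after_first_block w) \<partial>\<Omega>)
    = ennreal (1 - q) * (\<integral>\<^sup>+u. \<integral>\<^sup>+w. H True u w \<partial>\<Omega> \<partial>E) + ennreal q * (\<integral>\<^sup>+u. \<integral>\<^sup>+w. H False u w \<partial>\<Omega> \<partial>E)"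
proof -
  have [measurable]: "H b u \<in> borel_measurable \<Omega>" for b u
    by measurable
  have F: "(\<lambda>w. H (honest_first w) (first_block w) (after_first_block w))
      = (\<lambda>w. if honest_first w then H True (first_block w) (after_first_block w)
              else H False (first_block w) (after_first_block w))"
    by auto
  have push: "(\<integral>\<^sup>+w. H (honest_first (f w)) (first_block (f w)) (after_first_block (f w)) \<partial>\<Omega>)
      = (\<integral>\<^sup>+w. H b u w \<partial>\<Omega>)"
    if "\<And>w. regular_stream (fst w) \<Longrightarrow> regular_stream (snd w) \<Longrightarrow>
        honest_first (f w) = b \<and> first_block (f w) = u \<and> after_first_block (f w) = w"
    for f b u
    by (intro nn_integral_cong_AE eventually_mono[OF AE_regular_streams]) (simp add: that)
  have "(\<integral>\<^sup>+u. \<integral>\<^sup>+w. H (honest_first (push_honest u w)) (first_block (push_honest u w))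
        (after_first_block (push_honest u w)) \<partial>\<Omega> \<partial>E) = (\<integral>\<^sup>+u. \<integral>\<^sup>+w. H True u w \<partial>\<Omega> \<partial>E)"
    using AE_exp_dist_pos[of "1 / tau0"]
    by (intro nn_integral_cong_AE) (auto elim!: eventually_mono intro!: push
        simp: first_block_push_honest regular_stream_shd_pos)
  moreover have "(\<integral>\<^sup>+u. \<integral>\<^sup>+w. H (honest_first (push_attacker u w)) (first_block (push_attacker u w))
        (after_first_block (push_attacker u w)) \<partial>\<Omega> \<partial>E) = (\<integral>\<^sup>+u. \<integral>\<^sup>+w. H False u w \<partial>\<Omega> \<partial>E)"
    using AE_exp_dist_pos[of "1 / tau0"]
    by (intro nn_integral_cong_AE) (auto elim!: eventually_mono intro!: push
        simp: first_block_push_attacker regular_stream_shd_pos)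
  ultimately show ?thesis
    by (subst nn_integral_split_first_block) (unfold F, measurable)
qed

lemma nn_integral_plus_first_block:
  assumes [measurable]: "G \<in> borel_measurable \<Omega>"
  shows "(\<integral>\<^sup>+u. \<integral>\<^sup>+w. ennreal u + G w \<partial>\<Omega> \<partial>E) = ennreal tau0 + (\<integral>\<^sup>+w. G w \<partial>\<Omega>)"
proof -
  have "(\<integral>\<^sup>+u. ennreal u \<partial>E) = ennreal tau0"
    using nn_integral_exp_dist_id[of "1 / tau0"] tau0_pos by simp
  then show ?thesis
    by (simp add: nn_integral_add \<Omega>.emeasure_space_1 E.emeasure_space_1[simplified])
qed

lemma nn_integral_min_stop_time_block_time:
  "(\<integral>\<^sup>+w. min (stop_time A z n m w) (block_time k w) \<partial>\<Omega>) = ennreal (tau0 * mean_steps_upto (1 - q) q A z k n m)"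
proof (induction k arbitrary: n m)
  case 0
  then show ?case by simp
next
  case (Suc k)
  define H where "H b u w = ennreal u + min (stop_time A z (n + of_bool b) (m + of_bool (\<not> b)) w) (block_time k w)"
    for b u w
  have H_measurable [measurable]: "case_prod (H b) \<in> borel_measurable (borel \<Otimes>\<^sub>M \<Omega>)" for b
    unfolding H_def by measurable
  have "(\<integral>\<^sup>+w. min (stop_time A z n m w) (block_time (Suc k) w) \<partial>\<Omega>)
      = (\<integral>\<^sup>+w. (if stopped A z n m then 0 else H (honest_first w) (first_block w) (after_first_block w)) \<partial>\<Omega>)"
    by (intro nn_integral_cong_AE eventually_mono[OF AE_regular_streams])
      (simp add: H_def min_stop_time_block_time_Suc regular_stream_pair del: block_time.simps)
  also have "\<dots> = ennreal (tau0 * mean_steps_upto (1 - q) q A z (Suc k) n m)"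
  proof (cases "stopped A z n m")
    case False
    have nonneg: "0 \<le> mean_steps_upto (1 - q) q A z k n' m'" for n' m'
      using mean_steps_upto_nonneg[of "1 - q" q] q_pos q_less_1 by simp
    have "(\<integral>\<^sup>+w. H (honest_first w) (first_block w) (after_first_block w) \<partial>\<Omega>)
        = ennreal (1 - q) * (ennreal tau0 + ennreal (tau0 * mean_steps_upto (1 - q) q A z k (Suc n) m))
          + ennreal q * (ennreal tau0 + ennreal (tau0 * mean_steps_upto (1 - q) q A z k n (Suc m)))"
      by (subst nn_integral_first_block[OF H_measurable]) (simp add: H_def[abs_def] nn_integral_plus_first_block Suc.IH)
    also have "\<dots> = ennreal ((1 - q) * (tau0 + tau0 * mean_steps_upto (1 - q) q A z k (Suc n) m)
        + q * (tau0 + tau0 * mean_steps_upto (1 - q) q A z k n (Suc m)))"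
      using q_pos q_less_1 tau0_pos nonneg
      by (simp add: ennreal_plus[symmetric] ennreal_mult[symmetric] del: ennreal_plus)
    also have "(1 - q) * (tau0 + tau0 * mean_steps_upto (1 - q) q A z k (Suc n) m)
        + q * (tau0 + tau0 * mean_steps_upto (1 - q) q A z k n (Suc m))
        = tau0 * mean_steps_upto (1 - q) q A z (Suc k) n m"
      using False by (simp add: algebra_simps)
    finally show ?thesis
      using False by simp
  qed simp
  finally show ?case .
qed

lemma nn_integral_stop_time:
  "(\<integral>\<^sup>+w. stop_time A z n m w \<partial>\<Omega>) = (SUP k. ennreal (tau0 * mean_steps_upto (1 - q) q A z k n m))"
proof -
  have "(\<integral>\<^sup>+w. stop_time A z n m w \<partial>\<Omega>) = (\<integral>\<^sup>+w. (SUP k. min (stop_time A z n m w) (block_time k w)) \<partial>\<Omega>)"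
    using AE_regular_streams
  proof (intro nn_integral_cong_AE, eventually_elim)
    case (elim w)
    have "(SUP k. min (stop_time A z n m w) (block_time k w)) = min (stop_time A z n m w) (SUP k. block_time k w)"
      by (simp add: inf_min[symmetric] inf_SUP)
    then show ?case
      using elim by (simp add: SUP_block_time regular_stream_pair)
  qed
  also have "\<dots> = (SUP k. (\<integral>\<^sup>+w. min (stop_time A z n m w) (block_time k w) \<partial>\<Omega>))"
    by (intro nn_integral_monotone_convergence_SUP incseq_SucI le_funI min.mono order.refl block_time_mono)
      measurable
  finally show ?thesis
    by (simp add: nn_integral_min_stop_time_block_time)
qed

end

lemma (in mining) integral_T':
  assumes "block_walk (1 - q) q A z"
  shows "integrable \<Omega> (T' A z)" and "(\<integral>w. T' A z w \<partial>\<Omega>) = tau0 * block_walk.mean_steps (1 - q) q A z 0 1"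
proof -
  interpret block_walk "1 - q" q A z
    by (fact assms)
  have stop_time: "(\<integral>\<^sup>+w. stop_time A z 0 1 w \<partial>\<Omega>) = ennreal (tau0 * mean_steps 0 1)"
    using nn_integral_stop_time SUP_ennreal_steps_upto tau0_pos by simp
  then have "AE w in \<Omega>. stop_time A z 0 1 w \<noteq> \<infinity>"
    by (intro nn_integral_PInf_AE) simp_all
  then have T': "AE w in \<Omega>. ennreal (T' A z w) = stop_time A z 0 1 w \<and> 0 \<le> T' A z w"
    by eventually_elim (simp add: T'_eq_stop_time ennreal_enn2real_if)
  then have "(\<integral>\<^sup>+w. ennreal (T' A z w) \<partial>\<Omega>) = ennreal (tau0 * mean_steps 0 1)"
    unfolding stop_time[symmetric] by (intro nn_integral_cong_AE) (auto elim: eventually_mono)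
  then have "integrable \<Omega> (T' A z) \<and> (\<integral>w. T' A z w \<partial>\<Omega>) = tau0 * mean_steps 0 1"
    using T' mean_steps_nonneg tau0_pos
    by (subst nn_integral_eq_integrable[symmetric]) (auto elim: eventually_mono)
  then show "integrable \<Omega> (T' A z)" and "(\<integral>w. T' A z w \<partial>\<Omega>) = tau0 * mean_steps 0 1"
    by auto
qed

theorem proposition2:
  fixes q p lam tau0 :: real and z A :: nat
  assumes "0 < q" "q < 1/2" "p = 1 - q" "lam = q / p" "0 < tau0" "1 \<le> z" "z \<le> A"
  shows "(\<integral>\<omega>. T' A z \<omega> \<partial>mining_space q tau0) / tau0 =
     (A + 1) / (p - q) * (1 / (1 - lam ^ (A + 1)))
     - p ^ (z - 1) * q ^ z / ((p - q) * beta_fn z z)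
     + (z / p - 2 * (A + 1) / ((p - q) * (1 - lam ^ (A + 1)))) * inc_beta q z z"
proof -
  interpret mining q tau0
    using assms by unfold_locales auto
  interpret walk: block_walk p q A z
    using assms by unfold_locales auto
  have "(\<integral>\<omega>. T' A z \<omega> \<partial>mining_space q tau0) / tau0 = walk.mean_steps 0 1"
    using integral_T'(2) walk.block_walk_axioms assms(5) by (simp add: mining_space_eq assms(3))
  also note walk.mean_steps_start_eq
  finally show ?thesis
    unfolding walk.lam_def assms(4) .
qed

end
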